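(* Let $\mathbf{L}$ be a Euclidean modal logic such that $\mathtt{S}_{\mathbf{L}}\setminus\big((\{1\}\times\mathbf{N}^{-})\cup(\mathbf{N}^{+}\times\{-1,0,1\})\big)$ is finite. Let $\varphi$ be a modal formula with $\mathbf{L}=\mathbf{K5}\oplus\varphi$. Let $k$ be the least integer such that $k\ge4$ and for all $m\in\mathbf{N}^{+}$, $n\in\mathbf{N}^{-}$, if $(m,n)\in\mathtt{S}_{\mathbf{L}}\setminus\big((\{1\}\times\mathbf{N}^{-})\cup(\mathbf{N}^{+}\times\{-1,0,1\})\big)$ then $m+n\le k$. Then for every first-order sentence $A$, writing $q=\max\{\mathtt{qd}(A),3\}$, $Q=2q(q(q+1)^2+1)$ and $K=2^k$, the following are equivalent: (1) $A\in\mathtt{Th}(\mathtt{Fr}(\mathbf{L}))$; (2) for every finite Euclidean frame $(W,R)$ with $|W|\le 2\cdot q\cdot(QK+1)^2\cdot 2^{(QK)^2}\cdot Q\cdot K$ in which $\varphi$ is valid, $A$ is valid in $(W,R)$.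
   Context: A frame is a pair $(W,R)$ with $W$ non-empty and $R\subseteq W\times W$; Euclidean means $sRt$ and $sRu$ imply $tRu$ and $uRt$. Modal formulas (propositional variables, $\bot,\neg,\vee,\Box$) have standard Kripke semantics; validity in a frame means truth at all points under all valuations. A (normal) modal logic contains all tautologies and K axioms and is closed under uniform substitution, modus ponens and necessitation; a Euclidean modal logic is one not containing $\bot$ and containing $\Diamond\psi\to\Box\Diamond\psi$ for all $\psi$; $\mathbf{K5}$ is the least modal logic containing all $\Diamond\psi\to\Box\Diamond\psi$, and $\mathbf{K5}\oplus\varphi$ the least modal logic containing $\mathbf{K5}$ and $\varphi$. $\mathtt{Fr}(\mathbf{L})$ is the class of frames validating $\mathbf{L}$; $\mathtt{Th}(\mathcal{C})$ is the set of first-order sentences (one binary relation symbol $\mathbf{R}$ and equality) valid in all frames of $\mathcal{C}$; $\mathtt{qd}(A)$ is the quantifier depth. $\mathbf{N}^{+}=\{1,2,\dots\}$, $\mathbf{N}^{-}=\{-1,0,1,2,\dots\}$. For $m\in\mathbf{N}^{+}$, $n\ge0$, the flower $\mathcal{F}_m^n$ has universe $\{0,\dots,m+n\}$ and relation $(\{0\}\times\{1,\dots,m\})\cup\{1,\dots,m+n\}^2$; $\mathcal{F}_m^{-1}$ has universe $\{1,\dots,m\}$ and relation $\{1,\dots,m\}^2$. $\mathtt{S}_{\mathbf{L}}=\{(m,n)\in\mathbf{N}^{+}\times\mathbf{N}^{-}:\ \mathbf{L}\text{ valid in }\mathcal{F}_m^n\}$. *)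

theory Defs
  imports Main
begin

datatype fm = Var nat | Bot | Neg fm | Disj fm fm | Box fm

definition Imp :: "fm \<Rightarrow> fm \<Rightarrow> fm" where "Imp a b = Disj (Neg a) b"
definition Dia :: "fm \<Rightarrow> fm" where "Dia a = Neg (Box (Neg a))"

definition is_frame :: "'w set \<Rightarrow> ('w \<times> 'w) set \<Rightarrow> bool" where
  "is_frame W R \<longleftrightarrow> W \<noteq> {} \<and> R \<subseteq> W \<times> W"

definition euclidean :: "'w set \<Rightarrow> ('w \<times> 'w) set \<Rightarrow> bool" where
  "euclidean W R \<longleftrightarrow> (\<forall>s t u. (s,t) \<in> R \<longrightarrow> (s,u) \<in> R \<longrightarrow> (t,u) \<in> R \<and> (u,t) \<in> R)"

fun msat :: "'w set \<Rightarrow> ('w \<times> 'w) set \<Rightarrow> (nat \<Rightarrow> 'w set) \<Rightarrow> 'w \<Rightarrow> fm \<Rightarrow> bool" where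
  "msat W R V w (Var p) = (w \<in> V p)"
| "msat W R V w Bot = False"
| "msat W R V w (Neg a) = (\<not> msat W R V w a)"
| "msat W R V w (Disj a b) = (msat W R V w a \<or> msat W R V w b)"
| "msat W R V w (Box a) = (\<forall>v\<in>W. (w,v) \<in> R \<longrightarrow> msat W R V v a)"

definition mvalid :: "'w set \<Rightarrow> ('w \<times> 'w) set \<Rightarrow> fm \<Rightarrow> bool" where
  "mvalid W R a \<longleftrightarrow> (\<forall>V. \<forall>w\<in>W. msat W R V w a)"

definition mvalid_set :: "'w set \<Rightarrow> ('w \<times> 'w) set \<Rightarrow> fm set \<Rightarrow> bool" where
  "mvalid_set W R L \<longleftrightarrow> (\<forall>a\<in>L. mvalid W R a)"

text \<open>Propositional evaluation: boxed subformulas are treated as atoms.\<close>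
fun beval :: "(nat \<Rightarrow> bool) \<Rightarrow> (fm \<Rightarrow> bool) \<Rightarrow> fm \<Rightarrow> bool" where
  "beval v b (Var p) = v p"
| "beval v b Bot = False"
| "beval v b (Neg a) = (\<not> beval v b a)"
| "beval v b (Disj a c) = (beval v b a \<or> beval v b c)"
| "beval v b (Box a) = b a"

definition tautology :: "fm \<Rightarrow> bool" where
  "tautology a \<longleftrightarrow> (\<forall>v b. beval v b a)"

fun subst :: "(nat \<Rightarrow> fm) \<Rightarrow> fm \<Rightarrow> fm" where
  "subst s (Var p) = s p"
| "subst s Bot = Bot"
| "subst s (Neg a) = Neg (subst s a)"
| "subst s (Disj a c) = Disj (subst s a) (subst s c)"
| "subst s (Box a) = Box (subst s a)"

definition modal_logic :: "fm set \<Rightarrow> bool" where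
  "modal_logic L \<longleftrightarrow>
     (\<forall>a. tautology a \<longrightarrow> a \<in> L)
   \<and> (\<forall>a b. Imp (Box (Imp a b)) (Imp (Box a) (Box b)) \<in> L)
   \<and> (\<forall>a s. a \<in> L \<longrightarrow> subst s a \<in> L)
   \<and> (\<forall>a b. a \<in> L \<longrightarrow> Imp a b \<in> L \<longrightarrow> b \<in> L)
   \<and> (\<forall>a. a \<in> L \<longrightarrow> Box a \<in> L)"

definition euclidean_logic :: "fm set \<Rightarrow> bool" where
  "euclidean_logic L \<longleftrightarrow> modal_logic L \<and> Bot \<notin> L \<and> (\<forall>a. Imp (Dia a) (Box (Dia a)) \<in> L)"

definition K5 :: "fm set" where
  "K5 = \<Inter> {L. modal_logic L \<and> (\<forall>a. Imp (Dia a) (Box (Dia a)) \<in> L)}"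

definition K5_plus :: "fm \<Rightarrow> fm set" where
  "K5_plus \<phi> = \<Inter> {L. modal_logic L \<and> K5 \<subseteq> L \<and> \<phi> \<in> L}"

definition flower_W :: "nat \<Rightarrow> int \<Rightarrow> nat set" where
  "flower_W m n = (if n = -1 then {1..m} else {0..m + nat n})"

definition flower_R :: "nat \<Rightarrow> int \<Rightarrow> (nat \<times> nat) set" where
  "flower_R m n = (if n = -1 then {1..m} \<times> {1..m}
     else ({0} \<times> {1..m}) \<union> ({1..m + nat n} \<times> {1..m + nat n}))"

definition S_L :: "fm set \<Rightarrow> (nat \<times> int) set" where
  "S_L L = {(m,n). m \<ge> 1 \<and> n \<ge> -1 \<and> mvalid_set (flower_W m n) (flower_R m n) L}"

definition exceptional :: "(nat \<times> int) set" where
  "exceptional = {(m,n). m = 1 \<and> n \<ge> -1} \<union> {(m,n). m \<ge> 1 \<and> n \<in> {-1,0,1}}"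

datatype fof = FBot | FEq nat nat | FRel nat nat | FNeg fof | FConj fof fof | FDisj fof fof
  | FImp fof fof | FEx nat fof | FAll nat fof

fun fv :: "fof \<Rightarrow> nat set" where
  "fv FBot = {}"
| "fv (FEq x y) = {x, y}"
| "fv (FRel x y) = {x, y}"
| "fv (FNeg a) = fv a"
| "fv (FConj a b) = fv a \<union> fv b"
| "fv (FDisj a b) = fv a \<union> fv b"
| "fv (FImp a b) = fv a \<union> fv b"
| "fv (FEx x a) = fv a - {x}"
| "fv (FAll x a) = fv a - {x}"

definition sentence :: "fof \<Rightarrow> bool" where "sentence A \<longleftrightarrow> fv A = {}"

fun qd :: "fof \<Rightarrow> nat" where
  "qd FBot = 0"
| "qd (FEq x y) = 0"
| "qd (FRel x y) = 0"
| "qd (FNeg a) = qd a"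
| "qd (FConj a b) = max (qd a) (qd b)"
| "qd (FDisj a b) = max (qd a) (qd b)"
| "qd (FImp a b) = max (qd a) (qd b)"
| "qd (FEx x a) = Suc (qd a)"
| "qd (FAll x a) = Suc (qd a)"

fun fsat :: "'w set \<Rightarrow> ('w \<times> 'w) set \<Rightarrow> (nat \<Rightarrow> 'w) \<Rightarrow> fof \<Rightarrow> bool" where
  "fsat W R g FBot = False"
| "fsat W R g (FEq x y) = (g x = g y)"
| "fsat W R g (FRel x y) = ((g x, g y) \<in> R)"
| "fsat W R g (FNeg a) = (\<not> fsat W R g a)"
| "fsat W R g (FConj a b) = (fsat W R g a \<and> fsat W R g b)"
| "fsat W R g (FDisj a b) = (fsat W R g a \<or> fsat W R g b)"
| "fsat W R g (FImp a b) = (fsat W R g a \<longrightarrow> fsat W R g b)"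
| "fsat W R g (FEx x a) = (\<exists>d\<in>W. fsat W R (g(x := d)) a)"
| "fsat W R g (FAll x a) = (\<forall>d\<in>W. fsat W R (g(x := d)) a)"

definition fo_valid :: "'w set \<Rightarrow> ('w \<times> 'w) set \<Rightarrow> fof \<Rightarrow> bool" where
  "fo_valid W R A \<longleftrightarrow> (\<forall>g. (\<forall>i. g i \<in> W) \<longrightarrow> fsat W R g A)"

definition Fr :: "fm set \<Rightarrow> ('w set \<times> ('w \<times> 'w) set) set" where
  "Fr L = {(W,R). is_frame W R \<and> mvalid_set W R L}"

definition Th :: "('w set \<times> ('w \<times> 'w) set) set \<Rightarrow> fof set" where
  "Th C = {A. sentence A \<and> (\<forall>(W,R)\<in>C. fo_valid W R A)}"

end

theory Submission
  imports Defs
begin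

section \<open>First-order sentences and automorphisms\<close>

lemma finite_fv: "finite (fv A)"
  by (induction A) auto

lemma fsat_cong: "\<forall>x\<in>fv A. g x = g' x \<Longrightarrow> fsat W R g A = fsat W R g' A"
proof (induction A arbitrary: g g')
  case (FConj A B)
  then have "fsat W R g A = fsat W R g' A" "fsat W R g B = fsat W R g' B"
    by auto
  then show ?case
    by simp
next
  case (FDisj A B)
  then have "fsat W R g A = fsat W R g' A" "fsat W R g B = fsat W R g' B"
    by auto
  then show ?case
    by simp
next
  case (FImp A B)
  then have "fsat W R g A = fsat W R g' A" "fsat W R g B = fsat W R g' B"
    by auto
  then show ?case
    by simp
next
  case (FEx x A)
  then have "fsat W R (g(x := d)) A = fsat W R (g'(x := d)) A" for d
    by simp
  then show ?case
    by simp
next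
  case (FAll x A)
  then have "fsat W R (g(x := d)) A = fsat W R (g'(x := d)) A" for d
    by simp
  then show ?case
    by simp
qed auto

lemma fo_valid_sentence_iff:
  assumes "sentence A" and "w \<in> W"
  shows "fo_valid W R A \<longleftrightarrow> fsat W R (\<lambda>_. w) A"
  using assms fsat_cong[of A _ "\<lambda>_. w"] unfolding fo_valid_def sentence_def by auto

definition frame_aut :: "'w set \<Rightarrow> ('w \<times> 'w) set \<Rightarrow> ('w \<Rightarrow> 'w) \<Rightarrow> bool" where
  "frame_aut W R \<sigma> \<longleftrightarrow> bij_betw \<sigma> W W \<and> (\<forall>a\<in>W. \<forall>b\<in>W. (\<sigma> a, \<sigma> b) \<in> R \<longleftrightarrow> (a, b) \<in> R)"

lemma frame_aut_id: "frame_aut W R id"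
  unfolding frame_aut_def by simp

lemma frame_aut_involution:
  assumes inv: "\<And>v. v \<in> W \<Longrightarrow> \<sigma> v \<in> W \<and> \<sigma> (\<sigma> v) = v"
    and edge: "\<And>a b. a \<in> W \<Longrightarrow> b \<in> W \<Longrightarrow> (a, b) \<in> R \<Longrightarrow> (\<sigma> a, \<sigma> b) \<in> R"
  shows "frame_aut W R \<sigma>"
proof -
  have "bij_betw \<sigma> W W"
    by (rule bij_betw_byWitness[where f' = \<sigma>]) (use inv in auto)
  moreover have "(\<sigma> a, \<sigma> b) \<in> R \<Longrightarrow> (a, b) \<in> R" if "a \<in> W" "b \<in> W" for a b
    using edge[of "\<sigma> a" "\<sigma> b"] inv that by auto
  ultimately show ?thesis
    unfolding frame_aut_def using edge by blast
qed

lemma fsat_frame_aut: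
  assumes "frame_aut W R \<sigma>" and "\<And>i. g i \<in> W"
  shows "fsat W R (\<sigma> \<circ> g) A = fsat W R g A"
  using assms(2)
proof (induction A arbitrary: g)
  case (FEq x y)
  then show ?case
    using assms(1) unfolding frame_aut_def bij_betw_def inj_on_def by auto
next
  case (FRel x y)
  then show ?case
    using assms(1) unfolding frame_aut_def by auto
next
  case (FEx x A)
  have IH: "fsat W R (\<sigma> \<circ> g(x := d)) A = fsat W R (g(x := d)) A" if "d \<in> W" for d
    by (rule FEx.IH) (use FEx.prems that in auto)
  have "\<sigma> ` W = W"
    using assms(1) unfolding frame_aut_def bij_betw_def by blast
  then have "fsat W R (\<sigma> \<circ> g) (FEx x A) \<longleftrightarrow> (\<exists>d\<in>\<sigma> ` W. fsat W R ((\<sigma> \<circ> g)(x := d)) A)"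
    by simp
  also have "\<dots> \<longleftrightarrow> (\<exists>d\<in>W. fsat W R (\<sigma> \<circ> g(x := d)) A)"
    by (simp add: fun_upd_comp)
  also have "\<dots> \<longleftrightarrow> fsat W R g (FEx x A)"
    unfolding fsat.simps by (rule bex_cong[OF refl IH])
  finally show ?case .
next
  case (FAll x A)
  have IH: "fsat W R (\<sigma> \<circ> g(x := d)) A = fsat W R (g(x := d)) A" if "d \<in> W" for d
    by (rule FAll.IH) (use FAll.prems that in auto)
  have "\<sigma> ` W = W"
    using assms(1) unfolding frame_aut_def bij_betw_def by blast
  then have "fsat W R (\<sigma> \<circ> g) (FAll x A) \<longleftrightarrow> (\<forall>d\<in>\<sigma> ` W. fsat W R ((\<sigma> \<circ> g)(x := d)) A)"
    by simp
  also have "\<dots> \<longleftrightarrow> (\<forall>d\<in>W. fsat W R (\<sigma> \<circ> g(x := d)) A)"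
    by (simp add: fun_upd_comp)
  also have "\<dots> \<longleftrightarrow> fsat W R g (FAll x A)"
    unfolding fsat.simps by (rule ball_cong[OF refl IH])
  finally show ?case .
qed auto

text \<open>A Tarski--Vaught test in which the witnesses are supplied by automorphisms: any point can
  be moved into \<open>W'\<close> by an automorphism fixing fewer than \<open>q\<close> given points of \<open>W'\<close>.\<close>

definition aut_dense :: "'w set \<Rightarrow> ('w \<times> 'w) set \<Rightarrow> 'w set \<Rightarrow> nat \<Rightarrow> bool" where
  "aut_dense W R W' q \<longleftrightarrow> (\<forall>S d. S \<subseteq> W' \<and> finite S \<and> card S < q \<and> d \<in> W \<longrightarrow>
      (\<exists>\<sigma>. frame_aut W R \<sigma> \<and> (\<forall>s\<in>S. \<sigma> s = s) \<and> \<sigma> d \<in> W'))"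

lemma aut_dense_witness:
  assumes dense: "aut_dense W R W' q" and g: "\<And>i. g i \<in> W'" and "W' \<subseteq> W"
    and card: "card (fv A - {x}) < q" and d: "d \<in> W" "fsat W R (g(x := d)) A"
  shows "\<exists>d'\<in>W'. fsat W R (g(x := d')) A"
proof -
  have "finite (g ` (fv A - {x}))" and "card (g ` (fv A - {x})) < q"
    using card card_image_le[of "fv A - {x}" g] finite_fv by auto
  then obtain \<sigma> where \<sigma>: "frame_aut W R \<sigma>" "\<forall>s\<in>g ` (fv A - {x}). \<sigma> s = s" "\<sigma> d \<in> W'"
    using dense d(1) g unfolding aut_dense_def by blast
  have "fsat W R (\<sigma> \<circ> g(x := d)) A"
    using fsat_frame_aut[OF \<sigma>(1)] d g \<open>W' \<subseteq> W\<close> by (metis fun_upd_apply subsetD)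
  moreover have "\<forall>y\<in>fv A. (\<sigma> \<circ> g(x := d)) y = (g(x := \<sigma> d)) y"
    using \<sigma>(2) by auto
  ultimately show ?thesis
    using \<sigma>(3) fsat_cong by metis
qed

lemma card_fv_le_Suc: "card (fv A) \<le> Suc (card (fv A - {x}))"
  by (metis card.insert_remove card_mono finite_fv finite_insert subset_insertI)

lemma fsat_Restr_aut_dense:
  assumes dense: "aut_dense W R W' q" and sub: "W' \<subseteq> W"
  shows "(\<And>i. g i \<in> W') \<Longrightarrow> card (fv A) + qd A \<le> q \<Longrightarrow> fsat W' (Restr R W') g A = fsat W R g A"
proof (induction A arbitrary: g)
  case (FConj A B)
  then show ?case
    using card_mono[OF finite_fv, of "fv A" "FConj A B"] card_mono[OF finite_fv, of "fv B" "FConj A B"]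
    by simp
next
  case (FDisj A B)
  then show ?case
    using card_mono[OF finite_fv, of "fv A" "FDisj A B"] card_mono[OF finite_fv, of "fv B" "FDisj A B"]
    by simp
next
  case (FImp A B)
  then show ?case
    using card_mono[OF finite_fv, of "fv A" "FImp A B"] card_mono[OF finite_fv, of "fv B" "FImp A B"]
    by simp
next
  case (FEx x A)
  have IH: "fsat W' (Restr R W') (g(x := d)) A = fsat W R (g(x := d)) A" if "d \<in> W'" for d
    using FEx card_fv_le_Suc[of A x] that by simp
  have "card (fv A - {x}) < q"
    using FEx.prems(2) by simp
  then show ?case
    using aut_dense_witness[OF dense _ sub] FEx.prems(1) IH sub by auto
next
  case (FAll x A)
  have IH: "fsat W' (Restr R W') (g(x := d)) A = fsat W R (g(x := d)) A" if "d \<in> W'" for d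
    using FAll card_fv_le_Suc[of A x] that by simp
  have "card (fv (FNeg A) - {x}) < q"
    using FAll.prems(2) by simp
  from aut_dense_witness[OF dense, where g = g, OF FAll.prems(1) sub this]
  have "(\<forall>d\<in>W. fsat W R (g(x := d)) A) \<longleftrightarrow> (\<forall>d\<in>W'. fsat W R (g(x := d)) A)"
    using sub by auto
  then show ?case
    using IH by simp
qed auto

lemma fo_valid_Restr_aut_dense:
  assumes "aut_dense W R W' q" and "W' \<subseteq> W" and "W' \<noteq> {}"
    and "sentence A" and "qd A \<le> q"
  shows "fo_valid W' (Restr R W') A \<longleftrightarrow> fo_valid W R A"
proof -
  obtain w where "w \<in> W'"
    using assms(3) by blast
  then show ?thesis
    using fsat_Restr_aut_dense[OF assms(1,2), of "\<lambda>_. w" A] assms(2,4,5)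
    by (auto simp: fo_valid_sentence_iff sentence_def)
qed

section \<open>Modal validity\<close>

definition p_morphism ::
    "'a set \<Rightarrow> ('a \<times> 'a) set \<Rightarrow> 'b set \<Rightarrow> ('b \<times> 'b) set \<Rightarrow> 'a set \<Rightarrow> ('a \<Rightarrow> 'b) \<Rightarrow> bool" where
  "p_morphism W R W' R' U f \<longleftrightarrow> U \<subseteq> W \<and> f ` U \<subseteq> W'
    \<and> (\<forall>a\<in>U. \<forall>b\<in>W. (a, b) \<in> R \<longrightarrow> b \<in> U \<and> (f a, f b) \<in> R')
    \<and> (\<forall>a\<in>U. \<forall>y\<in>W'. (f a, y) \<in> R' \<longrightarrow> (\<exists>b\<in>U. (a, b) \<in> R \<and> f b = y))"

lemma msat_p_morphism:
  assumes "p_morphism W R W' R' U f" and "a \<in> U"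
  shows "msat W R (\<lambda>p. {v\<in>U. f v \<in> V p}) a \<psi> = msat W' R' V (f a) \<psi>"
  using assms(2)
proof (induction \<psi> arbitrary: a)
  case (Box \<psi>)
  have "(\<forall>b\<in>W. (a, b) \<in> R \<longrightarrow> msat W' R' V (f b) \<psi>) \<longleftrightarrow> (\<forall>y\<in>W'. (f a, y) \<in> R' \<longrightarrow> msat W' R' V y \<psi>)"
    using assms(1) Box.prems unfolding p_morphism_def by (smt (verit) image_subset_iff subsetD)
  moreover have "\<forall>b\<in>W. (a, b) \<in> R \<longrightarrow> b \<in> U"
    using assms(1) Box.prems unfolding p_morphism_def by blast
  ultimately show ?case
    using Box.IH by auto
qed auto

lemma mvalid_p_morphic_image:
  assumes "mvalid W R \<psi>" and "\<And>y. y \<in> W' \<Longrightarrow> \<exists>U f. p_morphism W R W' R' U f \<and> y \<in> f ` U"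
  shows "mvalid W' R' \<psi>"
  unfolding mvalid_def
proof (intro allI ballI)
  fix V y
  assume "y \<in> W'"
  then obtain U f a where f: "p_morphism W R W' R' U f" and a: "a \<in> U" "y = f a"
    using assms(2) by blast
  then have "a \<in> W"
    unfolding p_morphism_def by blast
  then show "msat W' R' V y \<psi>"
    using assms(1) msat_p_morphism[OF f a(1)] a(2) unfolding mvalid_def by blast
qed

lemma msat_beval: "msat W R V w \<psi> = beval (\<lambda>p. w \<in> V p) (\<lambda>\<chi>. msat W R V w (Box \<chi>)) \<psi>"
  by (induction \<psi>) auto

lemma msat_subst: "msat W R V w (subst s \<psi>) = msat W R (\<lambda>p. {v. msat W R V v (s p)}) w \<psi>"
  by (induction \<psi> arbitrary: w) auto

lemma modal_logic_mvalid: "modal_logic {\<psi>. mvalid W R \<psi>}"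
  unfolding modal_logic_def
proof (intro conjI allI impI)
  fix \<psi>
  assume "tautology \<psi>"
  then show "\<psi> \<in> {\<psi>. mvalid W R \<psi>}"
    unfolding mvalid_def tautology_def by (simp add: msat_beval[of W R _ _ \<psi>])
next
  fix \<psi> s
  assume "\<psi> \<in> {\<psi>. mvalid W R \<psi>}"
  then show "subst s \<psi> \<in> {\<psi>. mvalid W R \<psi>}"
    by (simp add: mvalid_def msat_subst)
qed (auto simp: mvalid_def Imp_def)

lemma mvalid_set_K5_plus_iff:
  assumes "R \<subseteq> W \<times> W"
  shows "mvalid_set W R (K5_plus \<phi>) \<longleftrightarrow> euclidean W R \<and> mvalid W R \<phi>"
proof
  have "Imp (Dia (Var 0)) (Box (Dia (Var 0))) \<in> K5_plus \<phi>" and "\<phi> \<in> K5_plus \<phi>"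
    unfolding K5_plus_def K5_def by blast+
  moreover assume "mvalid_set W R (K5_plus \<phi>)"
  ultimately have five: "mvalid W R (Imp (Dia (Var 0)) (Box (Dia (Var 0))))" and "mvalid W R \<phi>"
    unfolding mvalid_set_def by blast+
  have "(t, u) \<in> R" if "(s, t) \<in> R" "(s, u) \<in> R" for s t u
  proof -
    have W: "s \<in> W" "t \<in> W" "u \<in> W"
      using that assms by auto
    then have "msat W R (\<lambda>_. {u}) s (Imp (Dia (Var 0)) (Box (Dia (Var 0))))"
      using five unfolding mvalid_def by blast
    then show ?thesis
      using that W by (auto simp: Imp_def Dia_def)
  qed
  then show "euclidean W R \<and> mvalid W R \<phi>"
    using \<open>mvalid W R \<phi>\<close> unfolding euclidean_def by blast
next
  assume H: "euclidean W R \<and> mvalid W R \<phi>"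
  let ?M = "{\<psi>. mvalid W R \<psi>}"
  have "msat W R V w (Imp (Dia \<psi>) (Box (Dia \<psi>)))" for V w \<psi>
  proof -
    have "msat W R V u (Dia \<psi>)" if "(w, v) \<in> R" "v \<in> W" "msat W R V v \<psi>" "(w, u) \<in> R" for u v
    proof -
      have "(u, v) \<in> R"
        using H that(1,4) unfolding euclidean_def by blast
      then show ?thesis
        using that(2,3) by (auto simp: Dia_def)
    qed
    then show ?thesis
      by (auto simp: Imp_def Dia_def)
  qed
  then have "Imp (Dia \<psi>) (Box (Dia \<psi>)) \<in> ?M" for \<psi>
    unfolding mvalid_def by blast
  then have "K5 \<subseteq> ?M"
    unfolding K5_def using modal_logic_mvalid by (intro Inter_lower) simp
  then have "K5_plus \<phi> \<subseteq> ?M"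
    unfolding K5_plus_def using modal_logic_mvalid H by (intro Inter_lower) simp
  then show "mvalid_set W R (K5_plus \<phi>)"
    unfolding mvalid_set_def by blast
qed

locale euclidean_frame =
  fixes W :: "'w set" and R :: "('w \<times> 'w) set"
  assumes rel_subset: "R \<subseteq> W \<times> W" and euclidean: "euclidean W R"
begin

lemma succ_succ: "(s, t) \<in> R \<Longrightarrow> (s, u) \<in> R \<Longrightarrow> (t, u) \<in> R"
  using euclidean unfolding euclidean_def by blast

lemma succ_refl: "(s, t) \<in> R \<Longrightarrow> (t, t) \<in> R"
  using succ_succ by blast

lemma refl_in: "(x, x) \<in> R \<Longrightarrow> x \<in> W"
  using rel_subset by blast

lemma Image_refl_succ: "(x, x) \<in> R \<Longrightarrow> (x, v) \<in> R \<Longrightarrow> R `` {v} = R `` {x}"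
  using succ_succ by blast

lemma irrefl_no_pred: "(v, v) \<notin> R \<Longrightarrow> (a, v) \<notin> R"
  using succ_refl by blast

lemma euclidean_frame_Restr: "euclidean_frame W' (Restr R W')"
  using euclidean unfolding euclidean_frame_def euclidean_def by blast

text \<open>If every point of \<open>W'\<close> that sees something sees a point \<open>s\<close> of \<open>W'\<close>, then the point is the
  image of the subframe it generates under the p-morphism collapsing everything outside \<open>W'\<close>
  onto \<open>s\<close>.\<close>

lemma mvalid_Restr:
  assumes sub: "W' \<subseteq> W" and succ: "\<And>w. w \<in> W' \<Longrightarrow> R `` {w} \<noteq> {} \<Longrightarrow> R `` {w} \<inter> W' \<noteq> {}"
    and "mvalid W R \<psi>"
  shows "mvalid W' (Restr R W') \<psi>"
proof (rule mvalid_p_morphic_image[OF \<open>mvalid W R \<psi>\<close>])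
  fix y
  assume y: "y \<in> W'"
  show "\<exists>U f. p_morphism W R W' (Restr R W') U f \<and> y \<in> f ` U"
  proof (cases "R `` {y} = {}")
    case True
    then have "p_morphism W R W' (Restr R W') {y} id"
      unfolding p_morphism_def using y sub by auto
    then show ?thesis
      by force
  next
    case False
    then obtain s where s: "s \<in> W'" "(y, s) \<in> R"
      using succ y by blast
    define U where "U = insert y (R `` {s})"
    define f where "f v = (if v \<in> W' then v else s)" for v
    have ss: "(s, s) \<in> R"
      using succ_refl[OF s(2)] .
    have U_s: "(a, s) \<in> R" if "a \<in> U" for a
      using that s(2) succ_succ[OF _ ss] unfolding U_def by blast
    have s_U: "(s, b) \<in> R" if "a \<in> U" "(a, b) \<in> R" for a b
      using succ_succ[OF U_s[OF that(1)] that(2)] .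
    have fW': "f v \<in> W'" for v
      using s(1) unfolding f_def by simp
    have "p_morphism W R W' (Restr R W') U f"
      unfolding p_morphism_def
    proof (intro conjI ballI impI)
      show "U \<subseteq> W"
        using rel_subset sub y unfolding U_def by blast
      show "f ` U \<subseteq> W'"
        using fW' by blast
    next
      fix a b
      assume ab: "a \<in> U" "(a, b) \<in> R"
      show "b \<in> U"
        using s_U[OF ab] unfolding U_def by blast
      have "(f a, f b) \<in> R"
        using ab U_s[OF ab(1)] s_U[OF ab] ss unfolding f_def by simp
      then show "(f a, f b) \<in> Restr R W'"
        using fW' by blast
    next
      fix a z
      assume a: "a \<in> U" and z: "z \<in> W'" "(f a, z) \<in> Restr R W'"
      have az: "(a, z) \<in> R"
      proof (cases "a \<in> W'")
        case True
        then show ?thesis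
          using z unfolding f_def by simp
      next
        case False
        then have "(s, a) \<in> R" and "(s, z) \<in> R"
          using a y z unfolding U_def f_def by auto
        then show ?thesis
          using succ_succ by blast
      qed
      moreover have "z \<in> U" and "f z = z"
        using s_U[OF a az] z(1) unfolding U_def f_def by auto
      ultimately show "\<exists>b\<in>U. (a, b) \<in> R \<and> f b = z"
        by blast
    qed
    moreover have "y \<in> f ` U"
      using y unfolding U_def f_def by force
    ultimately show ?thesis
      by blast
  qed
qed

text \<open>Two points of a euclidean frame are connected iff they have the same key: the cluster
  they eventually see, or the point itself for an isolated point.\<close>

definition comp_key :: "'w \<Rightarrow> 'w set" where
  "comp_key v = (if R `` {v} = {} then {v} else R `` (R `` {v}))"

lemma comp_key_succ:
  assumes "(v, c) \<in> R"
  shows "comp_key v = R `` {c}"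
proof -
  have "R `` (R `` {v}) = R `` {c}"
  proof
    show "R `` (R `` {v}) \<subseteq> R `` {c}"
      using succ_succ[OF assms] Image_refl_succ[OF succ_refl[OF assms]] by blast
    show "R `` {c} \<subseteq> R `` (R `` {v})"
      using assms by blast
  qed
  then show ?thesis
    using assms unfolding comp_key_def by auto
qed

lemma comp_key_edge: "(a, b) \<in> R \<Longrightarrow> comp_key a = comp_key b"
  using comp_key_succ[of a b] comp_key_succ[of b b] succ_refl[of a b] by simp

lemma comp_key_cluster:
  assumes cc: "(c, c) \<in> R" and key: "comp_key v = R `` {c}"
  shows "R `` {v} \<noteq> {} \<and> R `` {v} \<subseteq> R `` {c}"
proof
  show "R `` {v} \<noteq> {}"
  proof
    assume "R `` {v} = {}"
    then have "(c, v) \<in> R"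
      using key unfolding comp_key_def by auto
    then show False
      using succ_refl \<open>R `` {v} = {}\<close> by blast
  qed
  then obtain u where "(v, u) \<in> R"
    by blast
  then show "R `` {v} \<subseteq> R `` {c}"
    using key comp_key_succ[of v u] succ_succ[of v u] by blast
qed

lemma comp_key_dead_end:
  assumes "R `` {w} = {}" and "comp_key v = comp_key w"
  shows "v = w"
proof -
  have "comp_key v = {w}"
    using assms unfolding comp_key_def by simp
  moreover have "R `` {v} = {}"
  proof (rule ccontr)
    assume "R `` {v} \<noteq> {}"
    then obtain u where "(v, u) \<in> R"
      by blast
    then have "(u, w) \<in> R"
      using comp_key_succ \<open>comp_key v = {w}\<close> by blast
    then show False
      using succ_refl assms(1) by blast
  qed
  ultimately show ?thesis
    unfolding comp_key_def by simp
qed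

end

section \<open>Faithful subframes\<close>

definition faithful_subframe :: "nat \<Rightarrow> 'w set \<Rightarrow> ('w \<times> 'w) set \<Rightarrow> 'w set \<Rightarrow> bool" where
  "faithful_subframe q W R W' \<longleftrightarrow> W' \<subseteq> W \<and> W' \<noteq> {}
    \<and> (\<forall>\<psi>. mvalid W R \<psi> \<longrightarrow> mvalid W' (Restr R W') \<psi>)
    \<and> (\<forall>A. sentence A \<and> qd A \<le> q \<longrightarrow> (fo_valid W' (Restr R W') A \<longleftrightarrow> fo_valid W R A))"

lemma faithful_subframe_trans:
  assumes "faithful_subframe q W R W'" and "faithful_subframe q W' (Restr R W') W''"
  shows "faithful_subframe q W R W''"
proof -
  have "Restr (Restr R W') W'' = Restr R W''"
    using assms(2) Restr_subset unfolding faithful_subframe_def by blast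
  then show ?thesis
    using assms unfolding faithful_subframe_def by (intro conjI allI impI) auto
qed

lemma (in euclidean_frame) faithful_subframeI:
  assumes sub: "W' \<subseteq> W" and "W \<noteq> {}" and "q > 0" and dense: "aut_dense W R W' q"
    and succ: "\<And>w. w \<in> W' \<Longrightarrow> R `` {w} \<noteq> {} \<Longrightarrow> R `` {w} \<inter> W' \<noteq> {}"
  shows "faithful_subframe q W R W'"
  unfolding faithful_subframe_def
proof (intro conjI allI impI)
  obtain d where "d \<in> W"
    using \<open>W \<noteq> {}\<close> by blast
  then have "{} \<subseteq> W' \<and> finite {} \<and> card {} < q \<and> d \<in> W"
    using \<open>q > 0\<close> by simp
  then obtain \<sigma> where "\<sigma> d \<in> W'"
    using dense unfolding aut_dense_def by blast
  then show ne: "W' \<noteq> {}"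
    by blast
  show "W' \<subseteq> W"
    by (rule sub)
  show "mvalid W' (Restr R W') \<psi>" if "mvalid W R \<psi>" for \<psi>
    using mvalid_Restr[OF sub succ that] .
  show "fo_valid W' (Restr R W') A \<longleftrightarrow> fo_valid W R A" if "sentence A \<and> qd A \<le> q" for A
    using fo_valid_Restr_aut_dense[OF dense sub ne] that by blast
qed

section \<open>Pruning interchangeable blocks\<close>

definition cap :: "nat \<Rightarrow> 'a set \<Rightarrow> 'a set" where
  "cap q X = (SOME K. K \<subseteq> X \<and> finite K \<and> card K \<le> q \<and> (X \<subseteq> K \<or> card K = q))"

lemma cap_spec: "cap q X \<subseteq> X \<and> finite (cap q X) \<and> card (cap q X) \<le> q \<and> (X \<subseteq> cap q X \<or> card (cap q X) = q)"
proof -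
  have "\<exists>K. K \<subseteq> X \<and> finite K \<and> card K \<le> q \<and> (X \<subseteq> K \<or> card K = q)"
  proof (cases "finite X \<and> card X \<le> q")
    case False
    then obtain K where "K \<subseteq> X" "finite K" "card K = q"
      by (metis infinite_arbitrarily_large nle_le obtain_subset_with_card_n)
    then show ?thesis
      by blast
  qed blast
  then show ?thesis
    unfolding cap_def by (rule someI_ex)
qed

lemma cap_subset: "cap q X \<subseteq> X"
  and finite_cap: "finite (cap q X)"
  and card_cap_le: "card (cap q X) \<le> q"
  and card_cap_eq: "x \<in> X \<Longrightarrow> x \<notin> cap q X \<Longrightarrow> card (cap q X) = q"
  using cap_spec[of q X] by blast+

lemma disjoint_family_avoids:
  assumes "finite S" and "card S < card K"
    and disj: "\<And>i j. i \<in> K \<Longrightarrow> j \<in> K \<Longrightarrow> i \<noteq> j \<Longrightarrow> B i \<inter> B j = {}"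
  shows "\<exists>i\<in>K. B i \<inter> S = {}"
proof (rule ccontr)
  assume "\<not> ?thesis"
  then have "\<forall>i\<in>K. \<exists>s. s \<in> B i \<inter> S"
    by blast
  then obtain f where f: "\<forall>i\<in>K. f i \<in> B i \<inter> S"
    by (rule bchoice[elim_format]) blast
  have "inj_on f K"
  proof (rule inj_onI)
    fix i j
    assume ij: "i \<in> K" "j \<in> K" "f i = f j"
    then have "f i \<in> B i \<inter> B j"
      using f by auto
    then show "i = j"
      using disj ij by blast
  qed
  moreover have "f ` K \<subseteq> S"
    using f by blast
  ultimately have "card K \<le> card S"
    using card_inj_on_le \<open>finite S\<close> by blast
  then show False
    using assms(2) by simp
qed

definition swap_on :: "('a \<Rightarrow> 'a) \<Rightarrow> 'a set \<Rightarrow> 'a set \<Rightarrow> 'a \<Rightarrow> 'a" where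
  "swap_on h A B v = (if v \<in> A then h v else if v \<in> B then inv_into A h v else v)"

lemma swap_on_outside: "v \<notin> A \<Longrightarrow> v \<notin> B \<Longrightarrow> swap_on h A B v = v"
  by (simp add: swap_on_def)

lemma swap_on_image:
  assumes h: "bij_betw h A B" and "A \<inter> B = {}" and "A' \<subseteq> A" and "h ` A' = B'"
  shows "v \<in> A' \<Longrightarrow> swap_on h A B v \<in> B'"
    and "v \<in> B' \<Longrightarrow> swap_on h A B v \<in> A'"
proof -
  show "v \<in> A' \<Longrightarrow> swap_on h A B v \<in> B'"
    using assms unfolding swap_on_def by auto
  assume "v \<in> B'"
  then obtain u where u: "u \<in> A'" "v = h u"
    using assms(4) by blast
  then have "inv_into A h v = u"
    using h assms(3) by (simp add: bij_betw_def inv_into_f_eq subsetD)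
  then show "swap_on h A B v \<in> A'"
    using u assms(2,3) h unfolding swap_on_def by (auto dest: bij_betw_apply)
qed

lemma swap_on_involution:
  assumes h: "bij_betw h A B" and disj: "A \<inter> B = {}" and "A \<union> B \<subseteq> W" and "v \<in> W"
  shows "swap_on h A B v \<in> W \<and> swap_on h A B (swap_on h A B v) = v"
proof -
  have hA: "h ` A = B"
    using h by (simp add: bij_betw_def)
  consider "v \<in> A" | "v \<in> B" | "v \<notin> A" "v \<notin> B"
    by blast
  then show ?thesis
  proof cases
    case 1
    then have "h v \<in> B" "h v \<notin> A"
      using hA disj by blast+
    moreover have "inv_into A h (h v) = v"
      using h 1 by (simp add: bij_betw_def)
    ultimately show ?thesis
      using 1 \<open>A \<union> B \<subseteq> W\<close> by (simp add: swap_on_def subset_iff)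
  next
    case 2
    then have "inv_into A h v \<in> A" "h (inv_into A h v) = v" "v \<notin> A"
      using hA disj by (auto intro: inv_into_into f_inv_into_f)
    then show ?thesis
      using 2 \<open>A \<union> B \<subseteq> W\<close> by (simp add: swap_on_def subset_iff)
  qed (use assms in \<open>simp add: swap_on_outside\<close>)
qed

definition interchangeable :: "'w set \<Rightarrow> ('w \<times> 'w) set \<Rightarrow> 'w set \<Rightarrow> 'w set \<Rightarrow> bool" where
  "interchangeable W R A B \<longleftrightarrow>
    (\<exists>\<sigma>. frame_aut W R \<sigma> \<and> (\<forall>v\<in>W - (A \<union> B). \<sigma> v = v) \<and> (\<forall>v\<in>A. \<sigma> v \<in> B))"

lemma interchangeable_swap_on:
  assumes h: "bij_betw h A B" and disj: "A \<inter> B = {}" and "A \<union> B \<subseteq> W"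
    and edge: "\<And>a b. (a, b) \<in> R \<Longrightarrow> (swap_on h A B a, swap_on h A B b) \<in> R"
  shows "interchangeable W R A B"
proof -
  have "frame_aut W R (swap_on h A B)"
    using frame_aut_involution swap_on_involution[OF h disj \<open>A \<union> B \<subseteq> W\<close>] edge by metis
  moreover have "\<forall>v\<in>A. swap_on h A B v \<in> B"
    using swap_on_image(1)[OF h disj subset_refl] h by (simp add: bij_betw_def)
  ultimately show ?thesis
    unfolding interchangeable_def by (metis DiffD2 UnI1 UnI2 swap_on_outside)
qed

definition kept :: "'i set \<Rightarrow> ('i \<Rightarrow> 'c) \<Rightarrow> nat \<Rightarrow> 'i \<Rightarrow> bool" where
  "kept I c q i \<longleftrightarrow> i \<in> cap q {j\<in>I. c j = c i}"

definition prune :: "'w set \<Rightarrow> 'i set \<Rightarrow> ('i \<Rightarrow> 'w set) \<Rightarrow> ('i \<Rightarrow> 'c) \<Rightarrow> nat \<Rightarrow> 'w set" where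
  "prune W I B c q = W - (\<Union>i\<in>{i\<in>I. \<not> kept I c q i}. B i)"

lemma prune_subset: "prune W I B c q \<subseteq> W"
  unfolding prune_def by blast

lemma mem_prune: "v \<in> prune W I B c q \<longleftrightarrow> v \<in> W \<and> (\<forall>i\<in>I. v \<in> B i \<longrightarrow> kept I c q i)"
  unfolding prune_def by blast

lemma kept_cong: "c j = c i \<Longrightarrow> kept I c q j \<longleftrightarrow> j \<in> cap q {k\<in>I. c k = c i}"
  unfolding kept_def by simp

lemma kept_in: "kept I c q i \<Longrightarrow> i \<in> I"
  unfolding kept_def using cap_subset[of q "{j\<in>I. c j = c i}"] by blast

lemma kept_block_subset_prune:
  assumes disj: "\<And>i j. i \<in> I \<Longrightarrow> j \<in> I \<Longrightarrow> i \<noteq> j \<Longrightarrow> B i \<inter> B j = {}"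
    and "kept I c q j" and "B j \<subseteq> W"
  shows "B j \<subseteq> prune W I B c q"
proof
  fix v
  assume v: "v \<in> B j"
  have "kept I c q i" if "i \<in> I" "v \<in> B i" for i
    using disj[OF that(1) kept_in[OF assms(2)]] v that(2) assms(2) by (cases "i = j") auto
  then show "v \<in> prune W I B c q"
    using v assms(3) unfolding mem_prune by blast
qed

lemma aut_dense_prune:
  assumes disj: "\<And>i j. i \<in> I \<Longrightarrow> j \<in> I \<Longrightarrow> i \<noteq> j \<Longrightarrow> B i \<inter> B j = {}"
    and B: "\<And>i. i \<in> I \<Longrightarrow> B i \<subseteq> W"
    and inter: "\<And>i j. i \<in> I \<Longrightarrow> j \<in> I \<Longrightarrow> c i = c j \<Longrightarrow> i \<noteq> j \<Longrightarrow> interchangeable W R (B i) (B j)"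
  shows "aut_dense W R (prune W I B c q) q"
  unfolding aut_dense_def
proof (intro allI impI)
  let ?W' = "prune W I B c q"
  fix S d
  assume S: "S \<subseteq> ?W' \<and> finite S \<and> card S < q \<and> d \<in> W"
  show "\<exists>\<sigma>. frame_aut W R \<sigma> \<and> (\<forall>s\<in>S. \<sigma> s = s) \<and> \<sigma> d \<in> ?W'"
  proof (cases "d \<in> ?W'")
    case True
    then show ?thesis
      using frame_aut_id by (metis id_apply)
  next
    case False
    then obtain i where i: "i \<in> I" "\<not> kept I c q i" "d \<in> B i"
      using S unfolding mem_prune by blast
    let ?K = "cap q {j\<in>I. c j = c i}"
    have "card ?K = q"
      using card_cap_eq[where X = "{j\<in>I. c j = c i}"] i unfolding kept_def by blast
    moreover have "\<And>j j'. j \<in> ?K \<Longrightarrow> j' \<in> ?K \<Longrightarrow> j \<noteq> j' \<Longrightarrow> B j \<inter> B j' = {}"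
      using disj cap_subset[where X = "{j\<in>I. c j = c i}"] by blast
    ultimately obtain j where j: "j \<in> ?K" "B j \<inter> S = {}"
      using disjoint_family_avoids[of S ?K B] S by force
    then have "j \<in> I" "c j = c i"
      using cap_subset[where X = "{j\<in>I. c j = c i}"] by blast+
    then have "kept I c q j"
      using kept_cong[of c j i I q] j(1) by simp
    then have "j \<noteq> i"
      using i(2) by blast
    then have "interchangeable W R (B i) (B j)"
      using inter[OF i(1) \<open>j \<in> I\<close>] \<open>c j = c i\<close> by simp
    then obtain \<sigma> where \<sigma>: "frame_aut W R \<sigma>" "\<forall>v\<in>W - (B i \<union> B j). \<sigma> v = v" "\<forall>v\<in>B i. \<sigma> v \<in> B j"
      unfolding interchangeable_def by blast
    have "B i \<inter> ?W' = {}"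
      using i(1,2) by (auto simp: mem_prune)
    then have "\<sigma> s = s" if "s \<in> S" for s
    proof -
      have "s \<in> ?W'"
        using S that by blast
      then have "s \<in> W - (B i \<union> B j)"
        using \<open>B i \<inter> ?W' = {}\<close> j(2) that prune_subset[of W I B c q] by blast
      then show ?thesis
        using \<sigma>(2) by blast
    qed
    moreover have "\<sigma> d \<in> ?W'"
      using kept_block_subset_prune[where B = B and I = I, OF disj \<open>kept I c q j\<close> B[OF \<open>j \<in> I\<close>]]
        \<sigma>(3) i(3) by blast
    ultimately show ?thesis
      using \<sigma>(1) by blast
  qed
qed

lemma finite_card_le_if_subset: "A \<subseteq> B \<Longrightarrow> finite B \<Longrightarrow> card B \<le> n \<Longrightarrow> finite A \<and> card A \<le> n"
  using card_mono finite_subset le_trans by metis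

lemma card_UN_le_mult:
  assumes "finite I" and "\<And>i. i \<in> I \<Longrightarrow> card (A i) \<le> b"
  shows "card (\<Union>i\<in>I. A i) \<le> card I * b"
proof -
  have "card (\<Union>i\<in>I. A i) \<le> (\<Sum>i\<in>I. card (A i))"
    using card_UN_le[OF assms(1)] .
  also have "\<dots> \<le> card I * b"
    using sum_bounded_above[of I "\<lambda>i. card (A i)" b] assms(2) by simp
  finally show ?thesis .
qed

lemma interchangeable_components:
  assumes h: "bij_betw h A B" and disj: "A \<inter> B = {}" and "A \<union> B \<subseteq> W"
    and iso: "\<And>a b. a \<in> A \<Longrightarrow> b \<in> A \<Longrightarrow> (h a, h b) \<in> R \<longleftrightarrow> (a, b) \<in> R"
    and closed: "\<And>a b. (a, b) \<in> R \<Longrightarrow> a \<in> A \<union> B \<longleftrightarrow> b \<in> A \<union> B"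
    and sep: "\<And>a b. (a, b) \<in> R \<Longrightarrow> a \<in> A \<longleftrightarrow> b \<in> A"
  shows "interchangeable W R A B"
proof (rule interchangeable_swap_on[OF h disj \<open>A \<union> B \<subseteq> W\<close>])
  let ?\<sigma> = "swap_on h A B"
  have hA: "h ` A = B"
    using h by (simp add: bij_betw_def)
  fix a b
  assume ab: "(a, b) \<in> R"
  consider "a \<in> A" "b \<in> A" | "a \<in> B" "b \<in> B" | "a \<notin> A \<union> B" "b \<notin> A \<union> B"
    using closed[OF ab] sep[OF ab] by blast
  then show "(?\<sigma> a, ?\<sigma> b) \<in> R"
  proof cases
    case 1
    then show ?thesis
      using iso ab by (simp add: swap_on_def)
  next
    case 2
    have inv: "?\<sigma> v \<in> A \<and> h (?\<sigma> v) = v" if "v \<in> B" for v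
    proof -
      have "v \<notin> A" "v \<in> h ` A"
        using that disj hA by auto
      then show ?thesis
        unfolding swap_on_def using that by (simp add: inv_into_into f_inv_into_f)
    qed
    then show ?thesis
      using iso[of "?\<sigma> a" "?\<sigma> b"] inv[OF 2(1)] inv[OF 2(2)] ab by simp
  next
    case 3
    then show ?thesis
      using ab by (simp add: swap_on_outside)
  qed
qed

section \<open>Few irreflexive twins\<close>

definition twins :: "'w set \<Rightarrow> ('w \<times> 'w) set \<Rightarrow> 'w set \<Rightarrow> 'w set" where
  "twins W R T = {v\<in>W. (v, v) \<notin> R \<and> R `` {v} = T}"

context euclidean_frame
begin

definition prune_twins :: "nat \<Rightarrow> 'w set" where
  "prune_twins q = prune W {v\<in>W. (v, v) \<notin> R} (\<lambda>v. {v}) (\<lambda>v. R `` {v}) q"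

lemma interchangeable_twins:
  assumes "d \<in> twins W R T" and "r \<in> twins W R T"
  shows "interchangeable W R {d} {r}"
proof (cases "d = r")
  case True
  then show ?thesis
    unfolding interchangeable_def using frame_aut_id by (metis id_apply)
next
  case False
  let ?\<sigma> = "swap_on (\<lambda>_. r) {d} {r}"
  have "inv_into {d} (\<lambda>_. r) r = d"
    by (rule inv_into_f_eq) auto
  then have \<sigma>: "?\<sigma> v = (if v = d then r else if v = r then d else v)" for v
    using False by (simp add: swap_on_def)
  have "(?\<sigma> a, ?\<sigma> b) \<in> R" if "(a, b) \<in> R" for a b
    using that assms irrefl_no_pred[of d a] irrefl_no_pred[of r a] unfolding twins_def \<sigma> by auto
  moreover have "bij_betw (\<lambda>_. r) {d} {r}"
    by (simp add: bij_betw_def)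
  ultimately show ?thesis
    using False assms by (intro interchangeable_swap_on) (auto simp: twins_def)
qed

lemma refl_mem_prune_twins: "(v, v) \<in> R \<Longrightarrow> v \<in> prune_twins q"
  using refl_in unfolding prune_twins_def mem_prune by blast

lemma faithful_prune_twins:
  assumes "W \<noteq> {}" and "q > 0"
  shows "faithful_subframe q W R (prune_twins q)"
proof (rule faithful_subframeI[OF _ assms])
  show "prune_twins q \<subseteq> W"
    unfolding prune_twins_def by (rule prune_subset)
  show "aut_dense W R (prune_twins q) q"
    unfolding prune_twins_def
    by (rule aut_dense_prune) (auto intro: interchangeable_twins simp: twins_def)
  show "R `` {w} \<inter> prune_twins q \<noteq> {}" if "R `` {w} \<noteq> {}" for w
    using that succ_refl refl_mem_prune_twins by blast
qed

lemma twins_prune_twins: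
  "twins (prune_twins q) (Restr R (prune_twins q)) T \<subseteq> cap q (twins W R T)"
proof
  fix v
  assume v: "v \<in> twins (prune_twins q) (Restr R (prune_twins q)) T"
  have "R `` {v} \<subseteq> prune_twins q"
    using succ_refl refl_mem_prune_twins by blast
  then have "(v, v) \<notin> R" "R `` {v} = T"
    using v unfolding twins_def by auto
  moreover have "v \<in> W" "kept {v\<in>W. (v, v) \<notin> R} (\<lambda>v. R `` {v}) q v"
    using v calculation unfolding twins_def prune_twins_def mem_prune by auto
  moreover have "{j \<in> {v\<in>W. (v, v) \<notin> R}. R `` {j} = R `` {v}} = twins W R T"
    using calculation unfolding twins_def by auto
  ultimately show "v \<in> cap q (twins W R T)"
    unfolding kept_def by simp
qed

lemma component_subset:
  assumes "(c, c) \<in> R"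
  shows "{v\<in>W. comp_key v = R `` {c}} \<subseteq> R `` {c} \<union> (\<Union>T\<in>Pow (R `` {c}). twins W R T)"
proof
  fix v
  assume v: "v \<in> {v\<in>W. comp_key v = R `` {c}}"
  then have sub: "R `` {v} \<subseteq> R `` {c}"
    using comp_key_cluster[OF assms] by blast
  show "v \<in> R `` {c} \<union> (\<Union>T\<in>Pow (R `` {c}). twins W R T)"
  proof (cases "(v, v) \<in> R")
    case True
    then show ?thesis
      using sub by blast
  next
    case False
    then have "v \<in> twins W R (R `` {v})"
      using v unfolding twins_def by blast
    then show ?thesis
      using sub by blast
  qed
qed

end

section \<open>Flowers\<close>

lemma ex_image_eq_interval:
  assumes "\<not> (finite X \<and> card X < m)" and "0 < m"
  shows "\<exists>g. g ` X = {Suc a..a + m}"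
proof -
  obtain A where A: "A \<subseteq> X" "finite A" "card A = m"
    using assms(1) by (metis infinite_arbitrarily_large not_less obtain_subset_with_card_n)
  then obtain e where e: "bij_betw e A {Suc a..a + m}"
    using finite_same_card_bij[of A "{Suc a..a + m}"] by auto
  have "(\<lambda>v. if v \<in> A then e v else Suc a) ` X = {Suc a..a + m}"
  proof
    show "(\<lambda>v. if v \<in> A then e v else Suc a) ` X \<subseteq> {Suc a..a + m}"
      using e assms(2) by (auto dest: bij_betw_apply)
    show "{Suc a..a + m} \<subseteq> (\<lambda>v. if v \<in> A then e v else Suc a) ` X"
    proof
      fix y
      assume "y \<in> {Suc a..a + m}"
      then obtain u where "u \<in> A" "y = e u"
        using e unfolding bij_betw_def by blast
      then show "y \<in> (\<lambda>v. if v \<in> A then e v else Suc a) ` X"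
        using A(1) by (intro image_eqI[of y _ u]) auto
    qed
  qed
  then show ?thesis
    by blast
qed

lemma two_elements_card: "x \<in> X \<Longrightarrow> y \<in> X \<Longrightarrow> x \<noteq> y \<Longrightarrow> \<not> (finite X \<and> card X < 2)"
  by (metis card_2_iff card_mono empty_subsetI insert_subset not_less)

lemma split_onto_intervals:
  assumes big: "\<not> (finite C \<and> card C \<le> kk)" and "3 \<le> kk" and "S \<subseteq> C"
    and S: "\<not> (finite S \<and> card S < 2)" and CS: "\<not> (finite (C - S) \<and> card (C - S) < 2)"
  shows "\<exists>m n g. 2 \<le> m \<and> 2 \<le> n \<and> m + n = Suc kk \<and> g ` S = {1..m} \<and> g ` (C - S) = {Suc m..m + n}"
proof -
  obtain m where m: "2 \<le> m" "m + 2 \<le> Suc kk" "\<not> (finite S \<and> card S < m)"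
    and rest: "\<not> (finite (C - S) \<and> card (C - S) < Suc kk - m)"
  proof (cases "finite S \<and> card S + 2 \<le> Suc kk")
    case True
    have "\<not> (finite (C - S) \<and> card (C - S) < Suc kk - card S)"
      using big True \<open>S \<subseteq> C\<close> card_Diff_subset[of S C] card_mono[of C S] by auto
    then show ?thesis
      using that[of "card S"] True S by auto
  next
    case False
    show ?thesis
    proof (rule that[of "kk - 1"])
      show "2 \<le> kk - 1" and "kk - 1 + 2 \<le> Suc kk"
        using \<open>3 \<le> kk\<close> by auto
      show "\<not> (finite S \<and> card S < kk - 1)"
        using False by auto
      have "Suc kk - (kk - 1) = 2"
        using \<open>3 \<le> kk\<close> by simp
      then show "\<not> (finite (C - S) \<and> card (C - S) < Suc kk - (kk - 1))"
        using CS by simp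
    qed
  qed
  define n where "n = Suc kk - m"
  have n: "2 \<le> n" "m + n = Suc kk"
    using m(2) unfolding n_def by auto
  have "0 < m"
    using m(1) by simp
  then obtain g1 where "g1 ` S = {Suc 0..0 + m}"
    using ex_image_eq_interval[OF m(3)] by blast
  then have g1: "g1 ` S = {1..m}"
    by simp
  obtain g2 where g2: "g2 ` (C - S) = {Suc m..m + n}"
    using ex_image_eq_interval[OF rest[folded n_def], of m] n(1) by auto
  let ?g = "\<lambda>v. if v \<in> S then g1 v else g2 v"
  have "?g ` S = g1 ` S" and "?g ` (C - S) = g2 ` (C - S)"
    by (rule image_cong; simp)+
  then have "?g ` S = {1..m}" and "?g ` (C - S) = {Suc m..m + n}"
    using g1 g2 by simp_all
  then show ?thesis
    using m(1) n by blast
qed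

lemma flower_W_nat: "flower_W m (int n) = {0..m + n}"
  and flower_R_nat: "flower_R m (int n) = {0} \<times> {1..m} \<union> {1..m + n} \<times> {1..m + n}"
  by (auto simp: flower_W_def flower_R_def)

context euclidean_frame
begin

text \<open>An irreflexive point \<open>r\<close> below a cluster \<open>C\<close> yields the flower \<open>\<F>\<^sub>m\<^sup>n\<close> as a p-morphic image, with
  \<open>r\<close> mapped to the root \<open>0\<close>, \<open>R``{r}\<close> onto the petals \<open>1..m\<close> and \<open>C - R``{r}\<close> onto the stem.\<close>

lemma mvalid_flower:
  assumes cc: "(c, c) \<in> R" and rc: "(r, c) \<in> R" and rr: "(r, r) \<notin> R"
    and gS: "g ` R `` {r} = {1..m}" and gC: "g ` (R `` {c} - R `` {r}) = {Suc m..m + n}"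
    and "mvalid W R \<psi>"
  shows "mvalid (flower_W m (int n)) (flower_R m (int n)) \<psi>"
proof (rule mvalid_p_morphic_image[OF \<open>mvalid W R \<psi>\<close>])
  define C where "C = R `` {c}"
  define f where "f v = (if v = r then 0 else g v)" for v
  have SC: "R `` {r} \<subseteq> C"
    using succ_succ[OF rc] unfolding C_def by blast
  have clus: "(a, b) \<in> R \<longleftrightarrow> b \<in> C" if "a \<in> C" for a b
    using that Image_refl_succ[OF cc] unfolding C_def by blast
  have rC: "r \<notin> C"
    using rr succ_refl unfolding C_def by blast
  have "C = R `` {r} \<union> (C - R `` {r})"
    using SC by blast
  then have "g ` C = {1..m} \<union> {Suc m..m + n}"
    using gS gC unfolding C_def by (metis image_Un)
  also have "\<dots> = {1..m + n}"
    by auto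
  finally have gC': "g ` C = {1..m + n}" .
  have "p_morphism W R (flower_W m (int n)) (flower_R m (int n)) (insert r C) f"
    unfolding p_morphism_def flower_W_nat flower_R_nat
  proof (intro conjI ballI impI)
    show "insert r C \<subseteq> W"
      using rel_subset rc unfolding C_def by auto
    show "f ` insert r C \<subseteq> {0..m + n}"
      using gC' rC unfolding f_def by auto
  next
    fix a b
    assume "a \<in> insert r C" "(a, b) \<in> R"
    then show "b \<in> insert r C" and "(f a, f b) \<in> {0} \<times> {1..m} \<union> {1..m + n} \<times> {1..m + n}"
      using clus SC gS gC' rC unfolding f_def by (auto dest: imageI[of _ _ g])
  next
    fix a y
    assume a: "a \<in> insert r C" and y: "y \<in> {0..m + n}" "(f a, y) \<in> {0} \<times> {1..m} \<union> {1..m + n} \<times> {1..m + n}"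
    show "\<exists>b\<in>insert r C. (a, b) \<in> R \<and> f b = y"
    proof (cases "a = r")
      case True
      then have "y \<in> g ` R `` {r}"
        using y gS unfolding f_def by auto
      then show ?thesis
        using True SC rr unfolding f_def by fastforce
    next
      case False
      then have "y \<in> g ` C"
        using a y gC' rC unfolding f_def by auto
      then show ?thesis
        using a False clus rC unfolding f_def by force
    qed
  qed
  moreover have "flower_W m (int n) \<subseteq> f ` insert r C"
  proof
    fix y
    assume "y \<in> flower_W m (int n)"
    then have "y = 0 \<or> y \<in> g ` C"
      using gC' unfolding flower_W_nat by auto
    then show "y \<in> f ` insert r C"
      using rC unfolding f_def by (auto simp: image_iff)
  qed
  ultimately show "\<exists>U f. p_morphism W R (flower_W m (int n)) (flower_R m (int n)) U f \<and> y \<in> f ` U"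
    if "y \<in> flower_W m (int n)" for y
    using that by blast
qed

lemma cluster_trichotomy:
  assumes "3 \<le> kk" and "mvalid W R \<phi>"
    and no_flower: "\<And>m n. 2 \<le> m \<Longrightarrow> 2 \<le> n \<Longrightarrow> m + n = Suc kk \<Longrightarrow>
      \<not> mvalid (flower_W m (int n)) (flower_R m (int n)) \<phi>"
    and cc: "(c, c) \<in> R" and rc: "(r, c) \<in> R" and big: "\<not> (finite (R `` {c}) \<and> card (R `` {c}) \<le> kk)"
  shows "(\<exists>x. R `` {r} = {x}) \<or> R `` {r} = R `` {c} \<or> (\<exists>z\<in>R `` {c}. R `` {r} = R `` {c} - {z})"
proof (rule ccontr)
  assume H: "\<not> ?thesis"
  let ?S = "R `` {r}" and ?C = "R `` {c}"
  have rr: "(r, r) \<notin> R"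
    using H Image_refl_succ[OF _ rc] by metis
  have SC: "?S \<subseteq> ?C"
    using succ_succ[OF rc] by blast
  have cS: "c \<in> ?S"
    using rc by blast
  obtain x where "x \<in> ?S" "x \<noteq> c"
    using H cS by blast
  then have S2: "\<not> (finite ?S \<and> card ?S < 2)"
    using two_elements_card cS by metis
  obtain z where z: "z \<in> ?C - ?S"
    using H SC by blast
  then obtain z' where "z' \<in> ?C - ?S" "z' \<noteq> z"
    using H SC by blast
  then have CS2: "\<not> (finite (?C - ?S) \<and> card (?C - ?S) < 2)"
    using two_elements_card z by metis
  obtain m n g where mn: "2 \<le> m" "2 \<le> n" "m + n = Suc kk"
    and g: "g ` ?S = {1..m}" "g ` (?C - ?S) = {Suc m..m + n}"
    using split_onto_intervals[OF big \<open>3 \<le> kk\<close> SC S2 CS2] by blast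
  have "mvalid (flower_W m (int n)) (flower_R m (int n)) \<phi>"
    using mvalid_flower[OF cc rc rr g \<open>mvalid W R \<phi>\<close>] .
  then show False
    using no_flower[OF mn] by blast
qed

end

section \<open>Large clusters and their blocks\<close>

locale trichotomous_frame = euclidean_frame W R for W :: "'w set" and R +
  fixes kk q :: nat
  assumes kk_ge: "2 \<le> kk" and q_ge: "2 \<le> q"
    and few_twins: "\<And>T. finite (twins W R T) \<and> card (twins W R T) \<le> q"
    and trichotomy: "\<And>c r. (c, c) \<in> R \<Longrightarrow> (r, c) \<in> R \<Longrightarrow> \<not> (finite (R `` {c}) \<and> card (R `` {c}) \<le> kk) \<Longrightarrow>
      (\<exists>x. R `` {r} = {x}) \<or> R `` {r} = R `` {c} \<or> (\<exists>z\<in>R `` {c}. R `` {r} = R `` {c} - {z})"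
begin

definition large :: "'w \<Rightarrow> bool" where
  "large x \<longleftrightarrow> (x, x) \<in> R \<and> \<not> (finite (R `` {x}) \<and> card (R `` {x}) \<le> kk)"

definition pendants :: "'w \<Rightarrow> 'w set" where
  "pendants x = twins W R {x}"

definition copendants :: "'w \<Rightarrow> 'w set" where
  "copendants x = twins W R (R `` {x} - {x})"

definition block :: "'w \<Rightarrow> 'w set" where
  "block x = insert x (pendants x \<union> copendants x)"

definition block_type :: "'w \<Rightarrow> 'w set \<times> nat \<times> nat" where
  "block_type x = (R `` {x}, card (pendants x), card (copendants x))"

definition prune_blocks :: "'w set" where
  "prune_blocks = prune W {x. large x} block block_type q"

lemma large_refl: "large x \<Longrightarrow> (x, x) \<in> R"
  by (simp add: large_def)

lemma large_not_subset: "large x \<Longrightarrow> finite F \<Longrightarrow> card F \<le> kk \<Longrightarrow> \<not> R `` {x} \<subseteq> F"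
  unfolding large_def by (meson card_mono finite_subset le_trans)

lemma large_succ_other:
  assumes "large x"
  obtains v where "(x, v) \<in> R" "v \<noteq> z"
  using large_not_subset[OF assms, of "{z}"] kk_ge by auto

lemma large_succ_large: "large x \<Longrightarrow> (x, v) \<in> R \<Longrightarrow> large v"
  using Image_refl_succ succ_refl unfolding large_def by metis

lemma mem_twins: "v \<in> W \<Longrightarrow> (v, v) \<notin> R \<Longrightarrow> R `` {v} = T \<Longrightarrow> v \<in> twins W R T"
  by (simp add: twins_def)

lemma block_refl: "w \<in> block y \<Longrightarrow> (w, w) \<in> R \<Longrightarrow> w = y"
  unfolding block_def pendants_def copendants_def twins_def by blast

lemma block_subset: "x \<in> W \<Longrightarrow> block x \<subseteq> W"
  unfolding block_def pendants_def copendants_def twins_def by blast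

lemma pendants_copendants_disjoint: "pendants x \<inter> copendants x = {}"
  unfolding pendants_def copendants_def twins_def by blast

lemma block_disjoint:
  assumes x: "large x" and y: "large y" and "x \<noteq> y"
  shows "block x \<inter> block y = {}"
proof (rule ccontr)
  assume "block x \<inter> block y \<noteq> {}"
  then obtain w where wx: "w \<in> block x" and wy: "w \<in> block y"
    by blast
  have "w \<noteq> x"
    using block_refl[OF wy] large_refl[OF x] \<open>x \<noteq> y\<close> by blast
  then have sx: "R `` {w} = {x} \<or> R `` {w} = R `` {x} - {x}"
    using wx unfolding block_def pendants_def copendants_def twins_def by blast
  have "w \<noteq> y"
    using block_refl[OF wx] large_refl[OF y] \<open>x \<noteq> y\<close> by blast
  then have sy: "R `` {w} = {y} \<or> R `` {w} = R `` {y} - {y}"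
    using wy unfolding block_def pendants_def copendants_def twins_def by blast
  have "card {x, y} \<le> kk"
    using kk_ge \<open>x \<noteq> y\<close> by simp
  then have not_xy: "\<not> R `` {z} \<subseteq> {x, y}" if "large z" for z
    using large_not_subset[OF that, of "{x, y}"] by simp
  consider "R `` {w} = {x}" | "R `` {w} = {y}" | "R `` {w} = R `` {x} - {x}" "R `` {w} = R `` {y} - {y}"
    using sx sy by blast
  then show False
  proof cases
    case 1
    then have "R `` {y} - {y} = {x}"
      using sy \<open>x \<noteq> y\<close> by auto
    then show False
      using not_xy[OF y] by blast
  next
    case 2
    then have "R `` {x} - {x} = {y}"
      using sx \<open>x \<noteq> y\<close> by auto
    then show False
      using not_xy[OF x] by blast
  next
    case 3
    obtain v where "(x, v) \<in> R" "v \<noteq> x"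
      using large_succ_other[OF x] by blast
    then have "(y, v) \<in> R"
      using 3 by blast
    then have "R `` {y} = R `` {x}"
      using Image_refl_succ[OF large_refl[OF y]] Image_refl_succ[OF large_refl[OF x] \<open>(x, v) \<in> R\<close>]
      by simp
    then have "y \<in> R `` {w}"
      using 3(1) large_refl[OF y] \<open>x \<noteq> y\<close> by auto
    then show False
      using 3(2) by blast
  qed
qed

definition block_swap :: "'w \<Rightarrow> 'w \<Rightarrow> ('w \<Rightarrow> 'w) \<Rightarrow> bool" where
  "block_swap x y \<sigma> \<longleftrightarrow> \<sigma> x = y \<and> \<sigma> y = x
    \<and> (\<forall>v\<in>pendants x. \<sigma> v \<in> pendants y) \<and> (\<forall>v\<in>pendants y. \<sigma> v \<in> pendants x)
    \<and> (\<forall>v\<in>copendants x. \<sigma> v \<in> copendants y) \<and> (\<forall>v\<in>copendants y. \<sigma> v \<in> copendants x)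
    \<and> (\<forall>v. v \<notin> block x \<longrightarrow> v \<notin> block y \<longrightarrow> \<sigma> v = v)"

lemma block_swap_commute: "block_swap x y \<sigma> \<Longrightarrow> block_swap y x \<sigma>"
  unfolding block_swap_def by (elim conjE) (intro conjI; assumption?; blast)

lemma block_swap_refl:
  assumes "block_swap x y \<sigma>" and "(b, b) \<in> R"
  shows "\<sigma> b = (if b = x then y else if b = y then x else b)"
proof -
  have "b \<notin> block x" if "b \<noteq> x"
    using block_refl[of b x] assms(2) that by blast
  moreover have "b \<notin> block y" if "b \<noteq> y"
    using block_refl[of b y] assms(2) that by blast
  ultimately show ?thesis
    using assms(1) unfolding block_swap_def by auto
qed

text \<open>A point outside the blocks of \<open>x\<close> and \<open>y\<close> cannot tell \<open>x\<close> from \<open>y\<close>: this is where the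
  trichotomy enters.\<close>

lemma sees_both:
  assumes x: "large x" and y: "(y, y) \<in> R" "R `` {y} = R `` {x}"
    and a: "a \<notin> block x" "a \<notin> block y" and ax: "(a, x) \<in> R"
  shows "(a, y) \<in> R"
proof -
  have yC: "y \<in> R `` {x}"
    using y by blast
  show ?thesis
  proof (cases "(a, a) \<in> R")
    case True
    then show ?thesis
      using Image_refl_succ[OF True ax] yC by blast
  next
    case False
    have "a \<in> W"
      using ax rel_subset by blast
    have big: "\<not> (finite (R `` {x}) \<and> card (R `` {x}) \<le> kk)"
      using x unfolding large_def by blast
    consider z where "R `` {a} = {z}" | "R `` {a} = R `` {x}" | z where "R `` {a} = R `` {x} - {z}"
      using trichotomy[OF large_refl[OF x] ax big] by blast
    then show ?thesis
    proof cases
      case (1 z)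
      then have "R `` {a} = {x}"
        using ax by auto
      then have "a \<in> pendants x"
        unfolding pendants_def using mem_twins[OF \<open>a \<in> W\<close> False] by blast
      then show ?thesis
        using a(1) unfolding block_def by blast
    next
      case 2
      then show ?thesis
        using yC by blast
    next
      case (3 z)
      show ?thesis
      proof (cases "z = y")
        case True
        then have "a \<in> copendants y"
          unfolding copendants_def using 3 y(2) mem_twins[OF \<open>a \<in> W\<close> False] by simp
        then show ?thesis
          using a(2) unfolding block_def by blast
      next
        case False
        then show ?thesis
          using 3 yC by blast
      qed
    qed
  qed
qed

lemma block_swap_edge_aux:
  assumes x: "large x" and y: "large y" and xy: "R `` {y} = R `` {x}" "x \<noteq> y"
    and \<sigma>: "block_swap x y \<sigma>" and ab: "(a, b) \<in> R" and ay: "a \<notin> block y"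
  shows "(\<sigma> a, \<sigma> b) \<in> R"
proof -
  let ?C = "R `` {x}"
  have xC: "x \<in> ?C" and yC: "y \<in> ?C"
    using large_refl x y xy by auto
  have \<sigma>b: "\<sigma> b = (if b = x then y else if b = y then x else b)"
    using block_swap_refl[OF \<sigma> succ_refl[OF ab]] .
  have C_edge: "(u, v) \<in> R" if "u \<in> ?C" "v \<in> ?C" for u v
    using that succ_succ by blast
  consider "a = x" | "a \<in> pendants x" | "a \<in> copendants x" | "a \<notin> block x"
    unfolding block_def by blast
  then show ?thesis
  proof cases
    case 1
    then show ?thesis
      using ab \<sigma> \<sigma>b xC yC C_edge unfolding block_swap_def by auto
  next
    case 2
    then have "R `` {a} = {x}" and "R `` {\<sigma> a} = {y}"
      using \<sigma> unfolding block_swap_def pendants_def twins_def by auto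
    then show ?thesis
      using ab \<sigma>b by auto
  next
    case 3
    then have "R `` {a} = ?C - {x}" and "R `` {\<sigma> a} = ?C - {y}"
      using \<sigma> xy unfolding block_swap_def copendants_def twins_def by auto
    then show ?thesis
      using ab \<sigma>b xC \<open>x \<noteq> y\<close> by auto
  next
    case 4
    then have "\<sigma> a = a"
      using \<sigma> ay unfolding block_swap_def by blast
    then show ?thesis
      using ab \<sigma>b sees_both[OF x large_refl[OF y] xy(1) 4 ay]
        sees_both[OF y large_refl[OF x] xy(1)[symmetric] ay 4] by auto
  qed
qed

lemma block_swap_edge:
  assumes x: "large x" and y: "large y" and xy: "R `` {y} = R `` {x}" "x \<noteq> y"
    and \<sigma>: "block_swap x y \<sigma>" and ab: "(a, b) \<in> R"
  shows "(\<sigma> a, \<sigma> b) \<in> R"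
proof (cases "a \<in> block y")
  case True
  then have "a \<notin> block x"
    using block_disjoint[OF x y xy(2)] by blast
  then show ?thesis
    by (rule block_swap_edge_aux[OF y x xy(1)[symmetric] xy(2)[symmetric] block_swap_commute[OF \<sigma>] ab])
next
  case False
  then show ?thesis
    by (rule block_swap_edge_aux[OF x y xy \<sigma> ab])
qed

lemma block_bij:
  assumes x: "large x" and y: "large y" and type: "block_type x = block_type y"
  obtains h where "bij_betw h (block x) (block y)" "h ` {x} = {y}"
    "h ` pendants x = pendants y" "h ` copendants x = copendants y"
proof -
  have fin: "finite (pendants v)" "finite (copendants v)" for v
    using few_twins unfolding pendants_def copendants_def by auto
  have "card (pendants x) = card (pendants y)" "card (copendants x) = card (copendants y)"
    using type unfolding block_type_def by auto
  then obtain h1 h2 where h1: "bij_betw h1 (pendants x) (pendants y)"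
    and h2: "bij_betw h2 (copendants x) (copendants y)"
    using finite_same_card_bij[OF fin(1)[of x] fin(1)[of y]] finite_same_card_bij[OF fin(2)[of x] fin(2)[of y]]
    by metis
  have out: "v \<notin> pendants u" "v \<notin> copendants u" if "(v, v) \<in> R" for u v
    using that unfolding pendants_def copendants_def twins_def by auto
  define h where "h v = (if v = x then y else if v \<in> pendants x then h1 v else h2 v)" for v
  have h0: "bij_betw h {x} {y}"
    by (simp add: h_def bij_betw_def)
  have hp: "bij_betw h (pendants x) (pendants y)"
  proof (rule bij_betw_cong[THEN iffD1, OF _ h1])
    show "h1 v = h v" if "v \<in> pendants x" for v
      using that out[OF large_refl[OF x]] unfolding h_def by auto
  qed
  have hc: "bij_betw h (copendants x) (copendants y)"
  proof (rule bij_betw_cong[THEN iffD1, OF _ h2])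
    show "h2 v = h v" if "v \<in> copendants x" for v
      using that out[OF large_refl[OF x]] pendants_copendants_disjoint[of x] unfolding h_def by auto
  qed
  have "{y} \<inter> pendants y = {}" and "({y} \<union> pendants y) \<inter> copendants y = {}"
    using out[OF large_refl[OF y], of y] pendants_copendants_disjoint[of y] by blast+
  then have "bij_betw h (({x} \<union> pendants x) \<union> copendants x) (({y} \<union> pendants y) \<union> copendants y)"
    using bij_betw_combine[OF bij_betw_combine[OF h0 hp] hc] by blast
  moreover have "block v = ({v} \<union> pendants v) \<union> copendants v" for v
    unfolding block_def by blast
  ultimately have "bij_betw h (block x) (block y)"
    by simp
  moreover have "h ` {x} = {y}"
    by (simp add: h_def)
  moreover have "h ` pendants x = pendants y" "h ` copendants x = copendants y"
    using hp hc unfolding bij_betw_def by blast+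
  ultimately show ?thesis
    using that by blast
qed

lemma interchangeable_blocks:
  assumes x: "large x" and y: "large y" and type: "block_type x = block_type y" and "x \<noteq> y"
  shows "interchangeable W R (block x) (block y)"
proof -
  obtain h where h: "bij_betw h (block x) (block y)" "h ` {x} = {y}"
    "h ` pendants x = pendants y" "h ` copendants x = copendants y"
    using block_bij[OF assms(1-3)] .
  have disj: "block x \<inter> block y = {}"
    using block_disjoint[OF x y \<open>x \<noteq> y\<close>] .
  let ?\<sigma> = "swap_on h (block x) (block y)"
  have sub: "{x} \<subseteq> block x" "pendants x \<subseteq> block x" "copendants x \<subseteq> block x"
    unfolding block_def by auto
  have "block_swap x y ?\<sigma>"
    unfolding block_swap_def
    using swap_on_image[OF h(1) disj sub(1) h(2)] swap_on_image[OF h(1) disj sub(2) h(3)]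
      swap_on_image[OF h(1) disj sub(3) h(4)] by (auto simp: swap_on_outside)
  moreover have "R `` {y} = R `` {x}"
    using type unfolding block_type_def by simp
  moreover have "block x \<union> block y \<subseteq> W"
    using block_subset refl_in large_refl x y by blast
  ultimately show ?thesis
    using interchangeable_swap_on[OF h(1) disj] block_swap_edge[OF x y _ \<open>x \<noteq> y\<close>] by blast
qed

end

context trichotomous_frame
begin

abbreviation kept_large :: "'w \<Rightarrow> bool" where
  "kept_large y \<equiv> kept {x. large x} block_type q y"

lemma mem_prune_blocks:
  "w \<in> prune_blocks \<longleftrightarrow> w \<in> W \<and> (\<forall>y. large y \<longrightarrow> w \<in> block y \<longrightarrow> kept_large y)"
  unfolding prune_blocks_def mem_prune by simp

lemma kept_block_subset:
  assumes "large y" and "kept_large y"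
  shows "block y \<subseteq> prune_blocks"
  unfolding prune_blocks_def
proof (rule kept_block_subset_prune[OF _ assms(2)])
  show "block y \<subseteq> W"
    using block_subset[OF refl_in[OF large_refl[OF assms(1)]]] .
  show "block i \<inter> block j = {}" if "i \<in> {x. large x}" "j \<in> {x. large x}" "i \<noteq> j" for i j
    using block_disjoint that by simp
qed

lemma refl_mem_prune_blocks:
  assumes "(v, v) \<in> R"
  shows "v \<in> prune_blocks \<longleftrightarrow> (large v \<longrightarrow> kept_large v)"
proof -
  have "v \<in> W" "v \<in> block v"
    using refl_in[OF assms] unfolding block_def by auto
  moreover have "y = v" if "v \<in> block y" for y
    using block_refl[OF that assms] by simp
  ultimately show ?thesis
    unfolding mem_prune_blocks by blast
qed

lemma large_succ_prune_blocks:
  assumes "large v"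
  obtains u where "(v, u) \<in> R" "u \<noteq> z" "u \<in> prune_blocks"
proof -
  obtain u where u: "(v, u) \<in> R" "u \<noteq> z"
    using large_succ_other[OF assms] by blast
  show ?thesis
  proof (cases "u \<in> prune_blocks")
    case True
    then show ?thesis
      using that u by blast
  next
    case False
    have "large u"
      using large_succ_large[OF assms u(1)] .
    let ?K = "cap q {j\<in>{x. large x}. block_type j = block_type u}"
    have "\<not> kept_large u"
      using False \<open>large u\<close> refl_mem_prune_blocks[OF large_refl[OF \<open>large u\<close>]] by blast
    then have "card ?K = q"
      using card_cap_eq[where X = "{j\<in>{x. large x}. block_type j = block_type u}"] \<open>large u\<close>
      unfolding kept_def by simp
    then have "\<not> ?K \<subseteq> {z}"
      using q_ge card_mono[of "{z}" ?K] by auto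
    then obtain x where x: "x \<in> ?K" "x \<noteq> z"
      by blast
    then have "large x" "block_type x = block_type u"
      using cap_subset[of q "{j\<in>{x. large x}. block_type j = block_type u}"] by blast+
    moreover have "kept_large x"
      using kept_cong[of block_type x u "{x. large x}" q] x(1) calculation(2) by simp
    ultimately have "x \<in> prune_blocks"
      using kept_block_subset unfolding block_def by blast
    moreover have "(v, x) \<in> R"
      using \<open>block_type x = block_type u\<close> Image_refl_succ[OF large_refl[OF assms] u(1)]
        large_refl[OF \<open>large x\<close>] unfolding block_type_def by auto
    ultimately show ?thesis
      using that x(2) by blast
  qed
qed

lemma succ_prune_blocks:
  assumes w: "w \<in> prune_blocks" and wv: "(w, v) \<in> R"
  shows "R `` {w} \<inter> prune_blocks \<noteq> {}"
proof (cases "(w, w) \<notin> R \<and> large v")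
  case True
  have vv: "(v, v) \<in> R"
    using succ_refl[OF wv] .
  have "w \<in> W"
    using w unfolding mem_prune_blocks by blast
  have big: "\<not> (finite (R `` {v}) \<and> card (R `` {v}) \<le> kk)"
    using True unfolding large_def by blast
  consider z where "R `` {w} = {z}" | "R `` {w} = R `` {v}" | z where "R `` {w} = R `` {v} - {z}"
    using trichotomy[OF vv wv big] by blast
  then show ?thesis
  proof cases
    case (1 z)
    then have "R `` {w} = {v}"
      using wv by auto
    then have "w \<in> block v"
      using True mem_twins[OF \<open>w \<in> W\<close>] unfolding block_def pendants_def by blast
    then have "kept_large v"
      using w True unfolding mem_prune_blocks by blast
    then have "v \<in> prune_blocks"
      using refl_mem_prune_blocks[OF vv] by blast
    then show ?thesis
      using wv by blast
  next
    case 2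
    obtain u where "(v, u) \<in> R" "u \<in> prune_blocks"
      using large_succ_prune_blocks[of v v] True by blast
    then show ?thesis
      using 2 by blast
  next
    case (3 z)
    obtain u where "(v, u) \<in> R" "u \<noteq> z" "u \<in> prune_blocks"
      using large_succ_prune_blocks[of v z] True by blast
    then show ?thesis
      using 3 by blast
  qed
next
  case False
  then have "v \<in> prune_blocks \<or> w \<in> prune_blocks \<and> (w, w) \<in> R"
    using w refl_mem_prune_blocks[OF succ_refl[OF wv]] by blast
  then show ?thesis
    using wv by blast
qed

lemma faithful_prune_blocks:
  assumes "W \<noteq> {}"
  shows "faithful_subframe q W R prune_blocks"
proof (rule faithful_subframeI[OF _ assms])
  show "prune_blocks \<subseteq> W"
    unfolding prune_blocks_def by (rule prune_subset)
  show "q > 0"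
    using q_ge by simp
  show "aut_dense W R prune_blocks q"
    unfolding prune_blocks_def
  proof (rule aut_dense_prune)
    show "block i \<inter> block j = {}" if "i \<in> {x. large x}" "j \<in> {x. large x}" "i \<noteq> j" for i j
      using block_disjoint that by simp
    show "block i \<subseteq> W" if "i \<in> {x. large x}" for i
      using block_subset refl_in large_refl that by simp
    show "interchangeable W R (block i) (block j)"
      if "i \<in> {x. large x}" "j \<in> {x. large x}" "block_type i = block_type j" "i \<noteq> j" for i j
      using interchangeable_blocks that by simp
  qed
  show "R `` {w} \<inter> prune_blocks \<noteq> {}" if "w \<in> prune_blocks" "R `` {w} \<noteq> {}" for w
    using succ_prune_blocks[OF that(1)] that(2) by blast
qed

end

lemma card_blocks_arith:
  fixes q kk :: nat
  assumes "1 \<le> q" and "1 \<le> kk"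
  shows "(q + 1)^2 * q * (2 * q + 1) + q \<le> 2 * q * (q * (q + 1)^2 + 1) * 2^kk"
proof -
  have "(q + 1)^2 * q * (2 * q + 1) + q \<le> 2 * q * (q * (q + 1)^2 + 1) * 2"
    using assms by (simp add: algebra_simps power2_eq_square)
  also have "\<dots> \<le> 2 * q * (q * (q + 1)^2 + 1) * 2^kk"
  proof (rule mult_le_mono2)
    show "(2::nat) \<le> 2^kk"
      using assms(2) power_increasing[of 1 kk "2::nat"] by simp
  qed
  finally show ?thesis .
qed

lemma card_small_cluster_arith:
  fixes q kk :: nat
  assumes "1 \<le> q"
  shows "kk + 2^kk * q \<le> 2 * q * (q * (q + 1)^2 + 1) * 2^kk"
proof -
  have "kk + 2^kk * q \<le> (q + 1) * 2^kk"
    using less_exp[of kk] by (simp add: algebra_simps)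
  also have "\<dots> \<le> 2 * q * (q * (q + 1)^2 + 1) * 2^kk"
    using assms by (intro mult_le_mono1) (simp add: algebra_simps)
  finally show ?thesis .
qed

context trichotomous_frame
begin

lemma card_large_cluster_prune_blocks:
  assumes "large c"
  shows "finite (R `` {c} \<inter> prune_blocks) \<and> card (R `` {c} \<inter> prune_blocks) \<le> (q + 1)^2 * q"
proof -
  let ?C = "R `` {c}"
  let ?P = "{?C} \<times> {0..q} \<times> {0..q}"
  let ?K = "\<lambda>t. cap q {j\<in>{x. large x}. block_type j = t}"
  have "?C \<inter> prune_blocks \<subseteq> (\<Union>t\<in>?P. ?K t)"
  proof
    fix x
    assume x: "x \<in> ?C \<inter> prune_blocks"
    then have "large x" and "R `` {x} = ?C"
      using large_succ_large[OF assms, of x] Image_refl_succ[OF large_refl[OF assms], of x] by auto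
    moreover have "card (pendants x) \<le> q" "card (copendants x) \<le> q"
      using few_twins unfolding pendants_def copendants_def by auto
    moreover have "kept_large x"
      using x \<open>large x\<close> refl_mem_prune_blocks[OF large_refl[OF \<open>large x\<close>]] by blast
    ultimately have "block_type x \<in> ?P" and "x \<in> ?K (block_type x)"
      unfolding kept_def block_type_def by auto
    then show "x \<in> (\<Union>t\<in>?P. ?K t)"
      by (rule UN_I)
  qed
  moreover have "finite (\<Union>t\<in>?P. ?K t)"
    by (simp add: finite_cap)
  moreover have "card (\<Union>t\<in>?P. ?K t) \<le> (q + 1)^2 * q"
  proof -
    have "card (\<Union>t\<in>?P. ?K t) \<le> card ?P * q"
      by (rule card_UN_le_mult) (simp_all add: card_cap_le)
    moreover have "card ?P = (q + 1)^2"
      by (simp add: card_cartesian_product power2_eq_square)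
    ultimately show ?thesis
      by simp
  qed
  ultimately show ?thesis
    using card_mono[of "\<Union>t\<in>?P. ?K t" "?C \<inter> prune_blocks"]
      finite_subset[of "?C \<inter> prune_blocks" "\<Union>t\<in>?P. ?K t"] by linarith
qed

lemma large_component_subset:
  assumes "large c"
  shows "{v\<in>prune_blocks. comp_key v = R `` {c}}
    \<subseteq> (\<Union>z\<in>R `` {c} \<inter> prune_blocks. block z) \<union> twins W R (R `` {c})"
proof
  let ?C = "R `` {c}"
  fix v
  assume v: "v \<in> {v\<in>prune_blocks. comp_key v = ?C}"
  then have vW: "v \<in> W" and key: "comp_key v = ?C" and vP: "v \<in> prune_blocks"
    unfolding mem_prune_blocks by auto
  obtain u where vu: "(v, u) \<in> R"
    using comp_key_cluster[OF large_refl[OF assms] key] by blast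
  then have uC: "u \<in> ?C"
    using comp_key_cluster[OF large_refl[OF assms] key] by blast
  have Cu: "R `` {u} = ?C" and "large u"
    using uC Image_refl_succ[OF large_refl[OF assms], of u] large_succ_large[OF assms, of u] by auto
  have in_block: "v \<in> (\<Union>z\<in>?C \<inter> prune_blocks. block z)" if "z \<in> ?C" "v \<in> block z" for z
  proof -
    have "large z"
      using large_succ_large[OF assms, of z] that(1) by blast
    then have "kept_large z"
      using vP that(2) unfolding mem_prune_blocks by blast
    then have "z \<in> prune_blocks"
      using refl_mem_prune_blocks[OF large_refl[OF \<open>large z\<close>]] by blast
    then show ?thesis
      using that by (intro UN_I[of z]) auto
  qed
  show "v \<in> (\<Union>z\<in>?C \<inter> prune_blocks. block z) \<union> twins W R ?C"
  proof (cases "(v, v) \<in> R")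
    case True
    then have "v \<in> ?C"
      using succ_succ[OF vu True] Cu by blast
    then show ?thesis
      using in_block[of v] unfolding block_def by blast
  next
    case False
    have big: "\<not> (finite (R `` {u}) \<and> card (R `` {u}) \<le> kk)"
      using \<open>large u\<close> unfolding large_def by blast
    consider z where "R `` {v} = {z}" | "R `` {v} = R `` {u}" | z where "z \<in> R `` {u}" "R `` {v} = R `` {u} - {z}"
      using trichotomy[OF large_refl[OF \<open>large u\<close>] vu big] by blast
    then show ?thesis
    proof cases
      case (1 z)
      then have "R `` {v} = {u}"
        using vu by auto
      then have "v \<in> block u"
        using mem_twins[OF vW False] unfolding block_def pendants_def by blast
      then show ?thesis
        using in_block uC by blast
    next
      case 2
      then have "v \<in> twins W R ?C"
        using mem_twins[OF vW False, of ?C] Cu by simp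
      then show ?thesis
        by blast
    next
      case (3 z)
      then have "z \<in> ?C" and "R `` {z} = ?C"
        using Cu Image_refl_succ[OF large_refl[OF assms], of z] by auto
      then have "v \<in> block z"
        using 3(2) Cu mem_twins[OF vW False] unfolding block_def copendants_def by auto
      then show ?thesis
        using in_block \<open>z \<in> ?C\<close> by blast
    qed
  qed
qed

lemma finite_block: "finite (block z)"
  using few_twins unfolding block_def pendants_def copendants_def by simp

lemma card_block_le: "card (block z) \<le> 2 * q + 1"
proof -
  have "card (block z) \<le> Suc (card (pendants z \<union> copendants z))"
    using few_twins[of "{z}"] few_twins[of "R `` {z} - {z}"]
    unfolding block_def pendants_def copendants_def by (simp add: card_insert_if)
  also have "\<dots> \<le> Suc (card (pendants z) + card (copendants z))"
    using card_Un_le[of "pendants z" "copendants z"] by simp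
  also have "\<dots> \<le> 2 * q + 1"
    using few_twins[of "{z}"] few_twins[of "R `` {z} - {z}"] unfolding pendants_def copendants_def
    by simp
  finally show ?thesis .
qed

lemma card_small_component:
  assumes cc: "(c, c) \<in> R" and "\<not> large c"
  shows "finite {v\<in>W. comp_key v = R `` {c}} \<and> card {v\<in>W. comp_key v = R `` {c}} \<le> kk + 2^kk * q"
proof -
  let ?C = "R `` {c}"
  let ?U = "?C \<union> (\<Union>T\<in>Pow ?C. twins W R T)"
  have fin: "finite ?C" "card ?C \<le> kk"
    using assms unfolding large_def by auto
  have "finite ?U"
    using fin few_twins by blast
  moreover have "card ?U \<le> kk + 2^kk * q"
  proof -
    have "card (Pow ?C) \<le> 2^kk"
      using fin by (simp add: card_Pow power_increasing)
    moreover have "card (\<Union>T\<in>Pow ?C. twins W R T) \<le> card (Pow ?C) * q"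
      using card_UN_le_mult[of "Pow ?C" "twins W R" q] fin few_twins by simp
    ultimately have "card (\<Union>T\<in>Pow ?C. twins W R T) \<le> 2^kk * q"
      using mult_le_mono1 le_trans by blast
    then show ?thesis
      using card_Un_le[of ?C "\<Union>T\<in>Pow ?C. twins W R T"] fin(2) by linarith
  qed
  ultimately show ?thesis
    by (rule finite_card_le_if_subset[OF component_subset[OF cc]])
qed

lemma card_large_component:
  assumes "large c"
  shows "finite {v\<in>prune_blocks. comp_key v = R `` {c}}
    \<and> card {v\<in>prune_blocks. comp_key v = R `` {c}} \<le> (q + 1)^2 * q * (2 * q + 1) + q"
proof -
  let ?G = "R `` {c} \<inter> prune_blocks"
  let ?U = "(\<Union>z\<in>?G. block z) \<union> twins W R (R `` {c})"
  have G: "finite ?G" "card ?G \<le> (q + 1)^2 * q"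
    using card_large_cluster_prune_blocks[OF assms] by auto
  have "finite ?U"
    using G(1) finite_block few_twins by blast
  moreover have "card ?U \<le> (q + 1)^2 * q * (2 * q + 1) + q"
  proof -
    have "card (\<Union>z\<in>?G. block z) \<le> card ?G * (2 * q + 1)"
      using card_UN_le_mult[OF G(1), of block "2 * q + 1"] card_block_le by blast
    also have "\<dots> \<le> (q + 1)^2 * q * (2 * q + 1)"
      using G(2) by (rule mult_le_mono1)
    finally show ?thesis
      using card_Un_le[of "\<Union>z\<in>?G. block z" "twins W R (R `` {c})"] few_twins[of "R `` {c}"] by linarith
  qed
  ultimately show ?thesis
    by (rule finite_card_le_if_subset[OF large_component_subset[OF assms]])
qed

lemma card_component_prune_blocks:
  assumes "w \<in> prune_blocks"
  shows "finite {v\<in>prune_blocks. comp_key v = comp_key w}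
    \<and> card {v\<in>prune_blocks. comp_key v = comp_key w} \<le> 2 * q * (q * (q + 1)^2 + 1) * 2^kk"
    (is "finite ?F \<and> card ?F \<le> ?N")
proof (cases "R `` {w} = {}")
  case True
  have "?F \<subseteq> {w}"
    using comp_key_dead_end[OF True] by blast
  moreover have "finite {w}" and "card {w} \<le> ?N"
    using q_ge by simp_all
  ultimately show ?thesis
    by (rule finite_card_le_if_subset)
next
  case False
  then obtain c where wc: "(w, c) \<in> R"
    by blast
  then have key: "comp_key w = R `` {c}" and cc: "(c, c) \<in> R"
    using comp_key_succ succ_refl by blast+
  show ?thesis
  proof (cases "large c")
    case False
    let ?U = "{v\<in>W. comp_key v = R `` {c}}"
    have "?F \<subseteq> ?U"
      using key unfolding mem_prune_blocks by blast
    moreover have "finite ?U" and "card ?U \<le> ?N"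
      using card_small_component[OF cc False] card_small_cluster_arith[of q kk] q_ge by auto
    ultimately show ?thesis
      by (rule finite_card_le_if_subset)
  next
    case True
    have "card {v\<in>prune_blocks. comp_key v = R `` {c}} \<le> ?N"
      using card_large_component[OF True] card_blocks_arith[of q kk] q_ge kk_ge by linarith
    then show ?thesis
      using card_large_component[OF True] key by simp
  qed
qed

end

lemma map_prod_image_iff:
  assumes "inj_on e X" and "x \<in> X" and "y \<in> X"
  shows "(e x, e y) \<in> map_prod e e ` (R \<inter> X \<times> X) \<longleftrightarrow> (x, y) \<in> R"
proof
  assume "(e x, e y) \<in> map_prod e e ` (R \<inter> X \<times> X)"
  then obtain x' y' where "(x', y') \<in> R" "x' \<in> X" "y' \<in> X" "e x' = e x" "e y' = e y"
    by auto
  then show "(x, y) \<in> R"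
    using assms inj_onD[OF assms(1)] by metis
qed (use assms in auto)

section \<open>Few components of each isomorphism type\<close>

locale bounded_components = euclidean_frame W R for W :: "'w set" and R +
  fixes \<kappa> :: "'w \<Rightarrow> 'k" and N :: nat
  assumes key_edge: "\<And>a b. (a, b) \<in> R \<Longrightarrow> \<kappa> a = \<kappa> b"
    and card_fibre: "\<And>w. w \<in> W \<Longrightarrow> finite {v\<in>W. \<kappa> v = \<kappa> w} \<and> card {v\<in>W. \<kappa> v = \<kappa> w} \<le> N"
begin

definition fibre :: "'w \<Rightarrow> 'w set" where
  "fibre w = {v\<in>W. \<kappa> v = \<kappa> w}"

definition fibres :: "'w set set" where
  "fibres = fibre ` W"

text \<open>A fixed numbering of a finite set; \<open>code X\<close> describes the isomorphism type of \<open>(X, R \<inter> X \<times> X)\<close>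
  by the edge relation transported along the numbering.\<close>

definition enum :: "'w set \<Rightarrow> 'w \<Rightarrow> nat" where
  "enum X = (SOME e. bij_betw e X {0..<card X})"

definition code :: "'w set \<Rightarrow> nat \<times> (nat \<times> nat) set" where
  "code X = (card X, map_prod (enum X) (enum X) ` (R \<inter> X \<times> X))"

definition prune_fibres :: "nat \<Rightarrow> 'w set" where
  "prune_fibres q = prune W fibres id code q"

lemma fibre_self: "w \<in> W \<Longrightarrow> w \<in> fibre w"
  unfolding fibre_def by simp

lemma fibre_finite: "X \<in> fibres \<Longrightarrow> finite X \<and> card X \<le> N"
  using card_fibre unfolding fibres_def fibre_def by blast

lemma fibre_subset: "X \<in> fibres \<Longrightarrow> X \<subseteq> W"
  unfolding fibres_def fibre_def by blast

lemma fibre_eq: "X \<in> fibres \<Longrightarrow> v \<in> X \<Longrightarrow> X = fibre v"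
  unfolding fibres_def fibre_def by auto

lemma fibre_disjoint: "X \<in> fibres \<Longrightarrow> Y \<in> fibres \<Longrightarrow> X \<noteq> Y \<Longrightarrow> X \<inter> Y = {}"
  using fibre_eq by blast

lemma fibre_edge:
  assumes "X \<in> fibres" and ab: "(a, b) \<in> R"
  shows "a \<in> X \<longleftrightarrow> b \<in> X"
proof -
  obtain w where "X = fibre w"
    using assms(1) unfolding fibres_def by blast
  moreover have "a \<in> W" "b \<in> W" "\<kappa> a = \<kappa> b"
    using rel_subset ab key_edge[OF ab] by auto
  ultimately show ?thesis
    unfolding fibre_def by auto
qed

lemma enum_bij: "finite X \<Longrightarrow> bij_betw (enum X) X {0..<card X}"
  unfolding enum_def by (rule someI_ex[OF ex_bij_betw_finite_nat])

lemma code_range: "X \<in> fibres \<Longrightarrow> code X \<in> {0..N} \<times> Pow ({0..<N} \<times> {0..<N})"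
  using fibre_finite[of X] bij_betw_apply[OF enum_bij] unfolding code_def by fastforce

lemma isomorphic_same_code:
  assumes X: "X \<in> fibres" and Y: "Y \<in> fibres" and "code X = code Y"
  obtains h where "bij_betw h X Y" "\<And>a b. a \<in> X \<Longrightarrow> b \<in> X \<Longrightarrow> (h a, h b) \<in> R \<longleftrightarrow> (a, b) \<in> R"
proof
  let ?h = "inv_into Y (enum Y) \<circ> enum X"
  have "card X = card Y"
    using \<open>code X = code Y\<close> unfolding code_def by simp
  then have eX: "bij_betw (enum X) X {0..<card Y}" and eY: "bij_betw (enum Y) Y {0..<card Y}"
    using enum_bij[of X] enum_bij[of Y] fibre_finite[OF X] fibre_finite[OF Y] by simp_all
  show h: "bij_betw ?h X Y"
    using bij_betw_trans[OF eX bij_betw_inv_into[OF eY]] .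
  have enum_h: "enum Y (?h a) = enum X a" if "a \<in> X" for a
  proof -
    have "enum X a \<in> enum Y ` Y"
      using eX eY that unfolding bij_betw_def by blast
    then show ?thesis
      by (simp add: f_inv_into_f)
  qed
  fix a b
  assume ab: "a \<in> X" "b \<in> X"
  have "(?h a, ?h b) \<in> R \<longleftrightarrow> (enum Y (?h a), enum Y (?h b)) \<in> map_prod (enum Y) (enum Y) ` (R \<inter> Y \<times> Y)"
    using map_prod_image_iff[of "enum Y" Y] bij_betw_apply[OF h] ab eY unfolding bij_betw_def by simp
  also have "\<dots> \<longleftrightarrow> (enum X a, enum X b) \<in> map_prod (enum X) (enum X) ` (R \<inter> X \<times> X)"
    using \<open>code X = code Y\<close> enum_h ab unfolding code_def by simp
  also have "\<dots> \<longleftrightarrow> (a, b) \<in> R"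
    using map_prod_image_iff[of "enum X" X] ab eX unfolding bij_betw_def by simp
  finally show "(?h a, ?h b) \<in> R \<longleftrightarrow> (a, b) \<in> R" .
qed

lemma interchangeable_fibres:
  assumes X: "X \<in> fibres" and Y: "Y \<in> fibres" and "code X = code Y" and "X \<noteq> Y"
  shows "interchangeable W R X Y"
proof -
  obtain h where h: "bij_betw h X Y" and iso: "\<And>a b. a \<in> X \<Longrightarrow> b \<in> X \<Longrightarrow> (h a, h b) \<in> R \<longleftrightarrow> (a, b) \<in> R"
    using isomorphic_same_code[OF X Y \<open>code X = code Y\<close>] by blast
  show ?thesis
  proof (rule interchangeable_components[OF h fibre_disjoint[OF X Y \<open>X \<noteq> Y\<close>] _ iso])
    show "X \<union> Y \<subseteq> W"
      using fibre_subset[OF X] fibre_subset[OF Y] by blast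
    show "a \<in> X \<union> Y \<longleftrightarrow> b \<in> X \<union> Y" and "a \<in> X \<longleftrightarrow> b \<in> X" if "(a, b) \<in> R" for a b
      using fibre_edge[OF X that] fibre_edge[OF Y that] by auto
  qed
qed

lemma mem_prune_fibres: "v \<in> prune_fibres q \<longleftrightarrow> v \<in> W \<and> kept fibres code q (fibre v)"
proof -
  have "v \<in> W \<Longrightarrow> X \<in> fibres \<Longrightarrow> v \<in> X \<longleftrightarrow> X = fibre v" for X
    using fibre_eq fibre_self by blast
  moreover have "v \<in> W \<Longrightarrow> fibre v \<in> fibres"
    unfolding fibres_def by blast
  ultimately show ?thesis
    unfolding prune_fibres_def mem_prune by auto
qed

lemma faithful_prune_fibres:
  assumes "W \<noteq> {}" and "q > 0"
  shows "faithful_subframe q W R (prune_fibres q)"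
proof (rule faithful_subframeI[OF _ assms])
  show "prune_fibres q \<subseteq> W"
    unfolding prune_fibres_def by (rule prune_subset)
  show "aut_dense W R (prune_fibres q) q"
    unfolding prune_fibres_def
  proof (rule aut_dense_prune)
    show "id X \<inter> id Y = {}" if "X \<in> fibres" "Y \<in> fibres" "X \<noteq> Y" for X Y
      using fibre_disjoint[OF that] by simp
    show "id X \<subseteq> W" if "X \<in> fibres" for X
      using fibre_subset[OF that] by simp
    show "interchangeable W R (id X) (id Y)"
      if "X \<in> fibres" "Y \<in> fibres" "code X = code Y" "X \<noteq> Y" for X Y
      using interchangeable_fibres[OF that] by simp
  qed
  show "R `` {w} \<inter> prune_fibres q \<noteq> {}" if w: "w \<in> prune_fibres q" and ne: "R `` {w} \<noteq> {}" for w
  proof -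
    obtain v where "(w, v) \<in> R"
      using ne by blast
    moreover from this have "fibre v = fibre w" "v \<in> W"
      using key_edge rel_subset unfolding fibre_def by auto
    ultimately have "v \<in> prune_fibres q"
      using w unfolding mem_prune_fibres by simp
    then show ?thesis
      using \<open>(w, v) \<in> R\<close> by blast
  qed
qed

lemma card_prune_fibres:
  "finite (prune_fibres q) \<and> card (prune_fibres q) \<le> (N + 1) * 2^(N * N) * (q * N)"
proof -
  let ?Codes = "{0..N} \<times> Pow ({0..<N} \<times> {0..<N})"
  let ?K = "\<lambda>c. cap q {X\<in>fibres. code X = c}"
  have "prune_fibres q \<subseteq> (\<Union>c\<in>?Codes. \<Union>(?K c))"
  proof
    fix v
    assume "v \<in> prune_fibres q"
    then have v: "v \<in> W" "fibre v \<in> ?K (code (fibre v))"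
      unfolding mem_prune_fibres kept_def by auto
    then have "code (fibre v) \<in> ?Codes"
      using code_range[of "fibre v"] unfolding fibres_def by simp
    then show "v \<in> (\<Union>c\<in>?Codes. \<Union>(?K c))"
      by (intro UN_I[of "code (fibre v)"] UnionI[OF v(2)] fibre_self[OF v(1)])
  qed
  moreover have "finite (\<Union>(?K c)) \<and> card (\<Union>(?K c)) \<le> q * N" for c
  proof -
    have sub: "?K c \<subseteq> fibres"
      using cap_subset[of q "{X\<in>fibres. code X = c}"] by blast
    then have fin: "X \<in> ?K c \<Longrightarrow> finite X \<and> card X \<le> N" for X
      using fibre_finite by blast
    have "card (\<Union>X\<in>?K c. X) \<le> card (?K c) * N"
      by (rule card_UN_le_mult) (use finite_cap fin in auto)
    also have "\<dots> \<le> q * N"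
      using card_cap_le[of q "{X\<in>fibres. code X = c}"] by (rule mult_le_mono1)
    finally show ?thesis
      using finite_cap[of q "{X\<in>fibres. code X = c}"] fin by auto
  qed
  moreover have "finite ?Codes" and "card ?Codes = (N + 1) * 2^(N * N)"
    by (simp_all add: card_cartesian_product card_Pow)
  ultimately have "finite (\<Union>c\<in>?Codes. \<Union>(?K c))"
    and "card (\<Union>c\<in>?Codes. \<Union>(?K c)) \<le> (N + 1) * 2^(N * N) * (q * N)"
    using card_UN_le_mult[of ?Codes "\<lambda>c. \<Union>(?K c)" "q * N"] by auto
  then show ?thesis
    using \<open>prune_fibres q \<subseteq> _\<close> card_mono[of "\<Union>c\<in>?Codes. \<Union>(?K c)" "prune_fibres q"]
      finite_subset[of "prune_fibres q" "\<Union>c\<in>?Codes. \<Union>(?K c)"] by linarith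
qed

end

lemma finite_faithful_subframe:
  fixes W :: "'w set" and R :: "('w \<times> 'w) set"
  assumes "R \<subseteq> W \<times> W" and "euclidean W R" and "W \<noteq> {}" and "mvalid W R \<phi>"
    and "3 \<le> kk" and "2 \<le> q"
    and no_flower: "\<And>m n. 2 \<le> m \<Longrightarrow> 2 \<le> n \<Longrightarrow> m + n = Suc kk \<Longrightarrow>
      \<not> mvalid (flower_W m (int n)) (flower_R m (int n)) \<phi>"
    and N: "N = 2 * q * (q * (q + 1)^2 + 1) * 2^kk"
  shows "\<exists>W'. faithful_subframe q W R W' \<and> finite W' \<and> card W' \<le> (N + 1) * 2^(N * N) * (q * N)"
proof -
  interpret E: euclidean_frame W R
    using assms(1,2) by unfold_locales
  define W1 where "W1 = E.prune_twins q"
  have F1: "faithful_subframe q W R W1"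
    unfolding W1_def using E.faithful_prune_twins assms(3,6) by simp
  interpret E1: euclidean_frame W1 "Restr R W1"
    by (rule E.euclidean_frame_Restr)
  have "W1 \<noteq> {}" and "mvalid W1 (Restr R W1) \<phi>"
    using F1 assms(4) unfolding faithful_subframe_def by auto
  interpret T: trichotomous_frame W1 "Restr R W1" kk q
  proof (rule trichotomous_frame.intro[OF E1.euclidean_frame_axioms], rule trichotomous_frame_axioms.intro)
    show "2 \<le> kk" and "2 \<le> q"
      using assms(5,6) by auto
    show "finite (twins W1 (Restr R W1) T) \<and> card (twins W1 (Restr R W1) T) \<le> q" for T
    proof -
      have sub: "twins W1 (Restr R W1) T \<subseteq> cap q (twins W R T)"
        unfolding W1_def by (rule E.twins_prune_twins)
      show ?thesis
        using finite_subset[OF sub finite_cap] le_trans[OF card_mono[OF finite_cap sub] card_cap_le] by blast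
    qed
    show "(\<exists>x. Restr R W1 `` {r} = {x}) \<or> Restr R W1 `` {r} = Restr R W1 `` {c}
        \<or> (\<exists>z\<in>Restr R W1 `` {c}. Restr R W1 `` {r} = Restr R W1 `` {c} - {z})"
      if "(c, c) \<in> Restr R W1" "(r, c) \<in> Restr R W1"
        "\<not> (finite (Restr R W1 `` {c}) \<and> card (Restr R W1 `` {c}) \<le> kk)" for c r
      using E1.cluster_trichotomy[OF assms(5) \<open>mvalid W1 (Restr R W1) \<phi>\<close> no_flower that] by blast
  qed
  have F2: "faithful_subframe q W1 (Restr R W1) T.prune_blocks"
    using T.faithful_prune_blocks[OF \<open>W1 \<noteq> {}\<close>] .
  then have "T.prune_blocks \<noteq> {}"
    unfolding faithful_subframe_def by blast
  interpret E2: euclidean_frame T.prune_blocks "Restr (Restr R W1) T.prune_blocks"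
    by (rule E1.euclidean_frame_Restr)
  interpret B: bounded_components T.prune_blocks "Restr (Restr R W1) T.prune_blocks" E1.comp_key N
  proof (rule bounded_components.intro[OF E2.euclidean_frame_axioms], rule bounded_components_axioms.intro)
    show "E1.comp_key a = E1.comp_key b" if "(a, b) \<in> Restr (Restr R W1) T.prune_blocks" for a b
      using E1.comp_key_edge that by blast
    show "finite {v\<in>T.prune_blocks. E1.comp_key v = E1.comp_key w}
        \<and> card {v\<in>T.prune_blocks. E1.comp_key v = E1.comp_key w} \<le> N" if "w \<in> T.prune_blocks" for w
      using T.card_component_prune_blocks[OF that] N by simp
  qed
  have F3: "faithful_subframe q T.prune_blocks (Restr (Restr R W1) T.prune_blocks) (B.prune_fibres q)"
    using B.faithful_prune_fibres \<open>T.prune_blocks \<noteq> {}\<close> assms(6) by simp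
  show ?thesis
    using faithful_subframe_trans[OF F1 faithful_subframe_trans[OF F2 F3]] B.card_prune_fibres by blast
qed

lemma Fr_K5_plus_iff: "(W, R) \<in> Fr (K5_plus \<phi>) \<longleftrightarrow> is_frame W R \<and> euclidean W R \<and> mvalid W R \<phi>"
  unfolding Fr_def is_frame_def using mvalid_set_K5_plus_iff by blast

lemma euclidean_flower: "euclidean (flower_W m (int n)) (flower_R m (int n))"
  unfolding euclidean_def flower_W_nat flower_R_nat by auto

lemma Th_Fr_K5_plus_iff_small:
  fixes A :: fof
  assumes "sentence A" and "qd A \<le> q" and "3 \<le> kk" and "2 \<le> q"
    and no_flower: "\<And>m n. 2 \<le> m \<Longrightarrow> 2 \<le> n \<Longrightarrow> m + n = Suc kk \<Longrightarrow>
      \<not> mvalid (flower_W m (int n)) (flower_R m (int n)) \<phi>"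
    and N: "N = 2 * q * (q * (q + 1)^2 + 1) * 2^kk" and bound: "(N + 1) * 2^(N * N) * (q * N) \<le> b"
  shows "A \<in> Th (Fr (K5_plus \<phi>) :: ('w set \<times> ('w \<times> 'w) set) set) \<longleftrightarrow>
    (\<forall>(W :: 'w set) R. is_frame W R \<and> finite W \<and> euclidean W R \<and> card W \<le> b \<and> mvalid W R \<phi>
      \<longrightarrow> fo_valid W R A)"
    (is "_ \<longleftrightarrow> ?small")
proof
  assume Th: "A \<in> Th (Fr (K5_plus \<phi>) :: ('w set \<times> ('w \<times> 'w) set) set)"
  show ?small
  proof (intro allI impI)
    fix W :: "'w set" and R
    assume "is_frame W R \<and> finite W \<and> euclidean W R \<and> card W \<le> b \<and> mvalid W R \<phi>"
    then have "(W, R) \<in> Fr (K5_plus \<phi>)"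
      unfolding Fr_K5_plus_iff by blast
    then show "fo_valid W R A"
      using Th unfolding Th_def by auto
  qed
next
  assume small: ?small
  have "fo_valid W R A" if "(W, R) \<in> Fr (K5_plus \<phi>)" for W :: "'w set" and R
  proof -
    have fr: "is_frame W R" and eu: "euclidean W R" and val: "mvalid W R \<phi>"
      using that unfolding Fr_K5_plus_iff by auto
    have "R \<subseteq> W \<times> W" "W \<noteq> {}"
      using fr unfolding is_frame_def by auto
    then obtain W' where W': "faithful_subframe q W R W'" "finite W'"
      "card W' \<le> (N + 1) * 2^(N * N) * (q * N)"
      using finite_faithful_subframe[OF _ eu _ val assms(3,4) no_flower N] by blast
    then have "W' \<noteq> {}" and "mvalid W' (Restr R W') \<phi>"
      and transfer: "fo_valid W' (Restr R W') A \<longleftrightarrow> fo_valid W R A"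
      using val assms(1,2) unfolding faithful_subframe_def by auto
    moreover have "euclidean W' (Restr R W')"
      using eu unfolding euclidean_def by blast
    moreover have "card W' \<le> b"
      using W'(3) bound by (rule le_trans)
    moreover have "is_frame W' (Restr R W')"
      unfolding is_frame_def using \<open>W' \<noteq> {}\<close> by blast
    ultimately have "fo_valid W' (Restr R W') A"
      using spec[OF spec[OF small, of W'], of "Restr R W'"] W'(2) by blast
    then show ?thesis
      using transfer by blast
  qed
  then show "A \<in> Th (Fr (K5_plus \<phi>) :: ('w set \<times> ('w \<times> 'w) set) set)"
    unfolding Th_def using assms(1) by blast
qed

lemma card_bound_arith:
  fixes N q :: nat
  shows "(N + 1) * 2^(N * N) * (q * N) \<le> 2 * q * (N + 1)^2 * 2^(N^2) * N"
proof -
  have "(N + 1) * 2^(N * N) * (q * N) = (q * N * 2^(N^2)) * (N + 1)"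
    by (simp add: power2_eq_square algebra_simps)
  also have "\<dots> \<le> (q * N * 2^(N^2)) * (2 * (N + 1)^2)"
    by (rule mult_le_mono2) (simp add: power2_eq_square)
  also have "\<dots> = 2 * q * (N + 1)^2 * 2^(N^2) * N"
    by (simp add: algebra_simps)
  finally show ?thesis .
qed

lemma no_flower_if_bounded:
  assumes "L = K5_plus \<phi>" and bound: "\<forall>(m,n)\<in>S_L L - exceptional. int m + n \<le> k"
    and "2 \<le> m" and "2 \<le> n" and "int (m + n) = k + 1"
  shows "\<not> mvalid (flower_W m (int n)) (flower_R m (int n)) \<phi>"
proof
  assume "mvalid (flower_W m (int n)) (flower_R m (int n)) \<phi>"
  moreover have "flower_R m (int n) \<subseteq> flower_W m (int n) \<times> flower_W m (int n)"
    unfolding flower_W_nat flower_R_nat by auto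
  ultimately have "mvalid_set (flower_W m (int n)) (flower_R m (int n)) L"
    using mvalid_set_K5_plus_iff euclidean_flower assms(1) by blast
  then have "(m, int n) \<in> S_L L - exceptional"
    using assms(3,4) unfolding S_L_def exceptional_def by auto
  with bound have "case (m, int n) of (m, n) \<Rightarrow> int m + n \<le> k"
    by (rule bspec)
  then show False
    using assms(5) by simp
qed

theorem lemma53:
  fixes L :: "fm set" and \<phi> :: fm and k :: int and A :: fof
  assumes "euclidean_logic L"
    and "finite (S_L L - exceptional)"
    and "L = K5_plus \<phi>"
    and "k \<ge> 4" and "\<forall>(m,n)\<in>S_L L - exceptional. int m + n \<le> k"
    and "\<forall>k'. k' \<ge> 4 \<and> (\<forall>(m,n)\<in>S_L L - exceptional. int m + n \<le> k') \<longrightarrow> k \<le> k'"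
    and "sentence A"
  shows "let q = max (qd A) 3; Q = 2 * q * (q * (q + 1)^2 + 1); K = 2 ^ nat k in
    A \<in> Th (Fr L :: ('w set \<times> ('w \<times> 'w) set) set) \<longleftrightarrow>
    (\<forall>(W :: 'w set) R. is_frame W R \<and> finite W \<and> euclidean W R
        \<and> card W \<le> 2 * q * (Q * K + 1)^2 * 2 ^ ((Q * K)^2) * Q * K
        \<and> mvalid W R \<phi> \<longrightarrow> fo_valid W R A)"
proof -
  define q where "q = max (qd A) 3"
  define Q where "Q = 2 * q * (q * (q + 1)^2 + 1)"
  define K :: nat where "K = 2 ^ nat k"
  define N where "N = 2 * q * (q * (q + 1)^2 + 1) * 2 ^ nat k"
  have no_flower: "\<not> mvalid (flower_W m (int n)) (flower_R m (int n)) \<phi>"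
    if "2 \<le> m" "2 \<le> n" "m + n = Suc (nat k)" for m n
    using no_flower_if_bounded[OF assms(3,5) that(1,2)] that(3) assms(4) by simp
  have "3 \<le> nat k" and "2 \<le> q" and "qd A \<le> q"
    using assms(4) unfolding q_def by auto
  have "A \<in> Th (Fr (K5_plus \<phi>) :: ('w set \<times> ('w \<times> 'w) set) set) \<longleftrightarrow>
    (\<forall>(W :: 'w set) R. is_frame W R \<and> finite W \<and> euclidean W R
      \<and> card W \<le> 2 * q * (N + 1)^2 * 2^(N^2) * N \<and> mvalid W R \<phi> \<longrightarrow> fo_valid W R A)"
    using Th_Fr_K5_plus_iff_small[OF assms(7) \<open>qd A \<le> q\<close> \<open>3 \<le> nat k\<close> \<open>2 \<le> q\<close>
      no_flower N_def card_bound_arith] .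
  moreover have "2 * q * (N + 1)^2 * 2^(N^2) * N = 2 * q * (Q * K + 1)^2 * 2 ^ ((Q * K)^2) * Q * K"
    unfolding N_def Q_def K_def by (simp only: mult.assoc)
  ultimately show ?thesis
    unfolding Let_def q_def[symmetric] Q_def[symmetric] K_def[symmetric] assms(3) by (simp only:)
qed

end
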